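(* For a smooth real-valued potential $V(t,x)$, the maximal Lie invariance algebra $\mathfrak g_V$ of $i\psi_t+\psi_{xx}+V(t,x)\psi=0$ is spanned by the vector fields $D_{\mathbb R}(\tau)$, $G(\chi)$, $I$, $\sigma M$ and $Z(\eta^0)$, where $\tau,\chi,\sigma$ run through the smooth real-valued functions of $t$ satisfying $$\tau V_t+\Big(\frac12\tau_tx+\chi\Big)V_x+\tau_tV=\frac18\tau_{ttt}x^2+\frac12\chi_{tt}x+\sigma_t,$$ and $\eta^0$ runs through the solution set of the equation.
   Context: $\psi$ is a complex-valued function of real $t,x$; $\psi^*$ is treated as an additional dependent variable and vector fields act on $(t,x,\psi,\psi^* )$. Notation: $M=i\psi\partial_\psi-i\psi^*\partial_{\psi^*}$, $I=\psi\partial_\psi+\psi^*\partial_{\psi^*}$, $D_{\mathbb R}(\tau)=\tau\partial_t+\frac12\tau_tx\partial_x+\frac18\tau_{tt}x^2M-\frac14\tau_tI$, $G(\chi)=\chi\partial_x+\frac12\chi_txM$, $Z(\eta)=\eta\partial_\psi+\eta^*\partial_{\psi^*}$; $\sigma M$ means $\sigma(t)M$. *)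

theory Defs
  imports "HOL-Analysis.Analysis"
begin

fun Ck :: "nat \<Rightarrow> ('a::real_normed_vector \<Rightarrow> 'b::real_normed_vector) \<Rightarrow> bool" where
  "Ck 0 f = continuous_on UNIV f"
| "Ck (Suc n) f = (\<exists>f'. (\<forall>x. (f has_derivative f' x) (at x)) \<and> (\<forall>v. Ck n (\<lambda>x. f' x v)))"

definition smooth :: "('a::real_normed_vector \<Rightarrow> 'b::real_normed_vector) \<Rightarrow> bool" where
  "smooth f \<longleftrightarrow> (\<forall>n. Ck n f)"

definition pdt :: "(real \<Rightarrow> real \<Rightarrow> 'a::real_normed_vector) \<Rightarrow> real \<Rightarrow> real \<Rightarrow> 'a" where
  "pdt f t x = vector_derivative (\<lambda>s. f s x) (at t)"

definition pdx :: "(real \<Rightarrow> real \<Rightarrow> 'a::real_normed_vector) \<Rightarrow> real \<Rightarrow> real \<Rightarrow> 'a" where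
  "pdx f t x = vector_derivative (\<lambda>y. f t y) (at x)"

(* Vector fields  tau d_t + xi d_x + eta d_psi + eta^* d_psi^*  on (t,x,psi,psi^* ),
   the point (t,x,psi,psi^* ) being encoded as (t,x,psi) with psi complex.
   Represented by the triple (tau, xi, eta); the coefficient of d_psi^* is conj eta. *)
type_synonym vf = "(real \<times> real \<times> complex \<Rightarrow> real) \<times> (real \<times> real \<times> complex \<Rightarrow> real) \<times> (real \<times> real \<times> complex \<Rightarrow> complex)"

definition vf_add :: "vf \<Rightarrow> vf \<Rightarrow> vf" where
  "vf_add P Q = (case P of (t1, x1, e1) \<Rightarrow> case Q of (t2, x2, e2) \<Rightarrow>
      (\<lambda>p. t1 p + t2 p, \<lambda>p. x1 p + x2 p, \<lambda>p. e1 p + e2 p))"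

definition vf_scale :: "real \<Rightarrow> vf \<Rightarrow> vf" where
  "vf_scale c Q = (case Q of (t1, x1, e1) \<Rightarrow>
      (\<lambda>p. c * t1 p, \<lambda>p. c * x1 p, \<lambda>p. of_real c * e1 p))"

definition vfI :: vf where
  "vfI = (\<lambda>_. 0, \<lambda>_. 0, \<lambda>(t, x, \<psi>). \<psi>)"

(* sigma(t) M,  M = i psi d_psi - i psi^* d_psi^* *)
definition vfM :: "(real \<Rightarrow> real) \<Rightarrow> vf" where
  "vfM \<sigma> = (\<lambda>_. 0, \<lambda>_. 0, \<lambda>(t, x, \<psi>). of_real (\<sigma> t) * \<i> * \<psi>)"

(* D_R(tau) = tau d_t + 1/2 tau_t x d_x + 1/8 tau_tt x^2 M - 1/4 tau_t I *)
definition vfD :: "(real \<Rightarrow> real) \<Rightarrow> vf" where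
  "vfD \<tau> = (\<lambda>(t, x, \<psi>). \<tau> t,
            \<lambda>(t, x, \<psi>). 1/2 * deriv \<tau> t * x,
            \<lambda>(t, x, \<psi>). of_real (1/8 * (deriv ^^ 2) \<tau> t * x\<^sup>2) * \<i> * \<psi>
                        - of_real (1/4 * deriv \<tau> t) * \<psi>)"

(* G(chi) = chi d_x + 1/2 chi_t x M *)
definition vfG :: "(real \<Rightarrow> real) \<Rightarrow> vf" where
  "vfG chi = (\<lambda>_. 0,
            \<lambda>(t, x, \<psi>). chi t,
            \<lambda>(t, x, \<psi>). of_real (1/2 * deriv chi t * x) * \<i> * \<psi>)"

definition vfZ :: "(real \<Rightarrow> real \<Rightarrow> complex) \<Rightarrow> vf" where
  "vfZ \<eta> = (\<lambda>_. 0, \<lambda>_. 0, \<lambda>(t, x, \<psi>). \<eta> t x)"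

definition schr :: "(real \<Rightarrow> real \<Rightarrow> real) \<Rightarrow> (real \<Rightarrow> real \<Rightarrow> complex) \<Rightarrow> real \<Rightarrow> real \<Rightarrow> complex" where
  "schr V \<psi> t x = \<i> * pdt \<psi> t x + pdx (pdx \<psi>) t x + of_real (V t x) * \<psi> t x"

definition is_solution :: "(real \<Rightarrow> real \<Rightarrow> real) \<Rightarrow> (real \<Rightarrow> real \<Rightarrow> complex) \<Rightarrow> bool" where
  "is_solution V \<psi> \<longleftrightarrow> smooth (\<lambda>(t, x). \<psi> t x) \<and> (\<forall>t x. schr V \<psi> t x = 0)"

(* Second prolongation pr^(2) Q applied to  i psi_t + psi_xx + V psi, evaluated on the
   2-jet of a function psi at (t,x):  eta^J = D_J(eta - tau psi_t - xi psi_x) + tau psi_Jt + xi psi_Jx,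
   total derivatives being evaluated along psi. *)
definition prolong_schr :: "(real \<Rightarrow> real \<Rightarrow> real) \<Rightarrow> vf \<Rightarrow> (real \<Rightarrow> real \<Rightarrow> complex) \<Rightarrow> real \<Rightarrow> real \<Rightarrow> complex" where
  "prolong_schr V Q \<psi> t x = (case Q of (\<tau>, \<xi>, \<eta>) \<Rightarrow>
     let T = (\<lambda>t x. \<tau> (t, x, \<psi> t x));
         X = (\<lambda>t x. \<xi> (t, x, \<psi> t x));
         H = (\<lambda>t x. \<eta> (t, x, \<psi> t x));
         Qc = (\<lambda>t x. H t x - of_real (T t x) * pdt \<psi> t x - of_real (X t x) * pdx \<psi> t x);
         eta_t = pdt Qc t x + of_real (T t x) * pdt (pdt \<psi>) t x + of_real (X t x) * pdx (pdt \<psi>) t x;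
         eta_xx = pdx (pdx Qc) t x + of_real (T t x) * pdt (pdx (pdx \<psi>)) t x
                    + of_real (X t x) * pdx (pdx (pdx \<psi>)) t x
     in \<i> * eta_t + eta_xx + of_real (T t x * pdt V t x + X t x * pdx V t x) * \<psi> t x
        + of_real (V t x) * H t x)"

definition is_lie_symmetry :: "(real \<Rightarrow> real \<Rightarrow> real) \<Rightarrow> vf \<Rightarrow> bool" where
  "is_lie_symmetry V Q \<longleftrightarrow> (case Q of (\<tau>, \<xi>, \<eta>) \<Rightarrow> smooth \<tau> \<and> smooth \<xi> \<and> smooth \<eta>) \<and>
     (\<forall>\<psi>. smooth (\<lambda>(t, x). \<psi> t x) \<longrightarrow>
        (\<forall>t x. schr V \<psi> t x = 0 \<longrightarrow> prolong_schr V Q \<psi> t x = 0))"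

definition lie_algebra :: "(real \<Rightarrow> real \<Rightarrow> real) \<Rightarrow> vf set" where
  "lie_algebra V = {Q. is_lie_symmetry V Q}"

definition det_eq :: "(real \<Rightarrow> real \<Rightarrow> real) \<Rightarrow> (real \<Rightarrow> real) \<Rightarrow> (real \<Rightarrow> real) \<Rightarrow> (real \<Rightarrow> real) \<Rightarrow> bool" where
  "det_eq V \<tau> chi \<sigma> \<longleftrightarrow> (\<forall>t x.
     \<tau> t * pdt V t x + (1/2 * deriv \<tau> t * x + chi t) * pdx V t x + deriv \<tau> t * V t x
       = 1/8 * (deriv ^^ 3) \<tau> t * x\<^sup>2 + 1/2 * (deriv ^^ 2) chi t * x + deriv \<sigma> t)"

end

theory Submission
  imports Defs
begin

text \<open>
  On a solution the 2-jet \<open>(\<psi>, \<psi>\<^sub>x, \<psi>\<^sub>x\<^sub>x, \<psi>\<^sub>x\<^sub>t)\<close> is arbitrary at any point, while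
  \<open>\<psi>\<^sub>t = \<i> (\<psi>\<^sub>x\<^sub>x + V \<psi>)\<close>; quadratic polynomials realise every such jet. So the invariance
  condition is a polynomial identity in the jet, and its coefficients force \<open>\<tau>\<close> to depend on \<open>t\<close>
  only, \<open>\<xi>\<close> on \<open>(t, x)\<close> only, and \<open>\<eta>\<close> to be holomorphic with vanishing second derivative in
  \<open>\<psi>\<close>, i.e. \<open>\<eta> = H(t, x) + F(t, x) \<psi>\<close>. For such fields the condition splits into:
  \<open>H\<close> is a solution, \<open>2 \<xi>\<^sub>x = \<tau>\<^sub>t\<close>, \<open>2 F\<^sub>x = \<i> \<xi>\<^sub>t + \<xi>\<^sub>x\<^sub>x\<close> and
  \<open>\<i> F\<^sub>t + F\<^sub>x\<^sub>x + \<tau>\<^sub>t V + \<tau> V\<^sub>t + \<xi> V\<^sub>x = 0\<close>.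
  Integrating in \<open>x\<close> gives \<open>\<xi> = \<tau>\<^sub>t x / 2 + \<chi>\<close> and
  \<open>F = c - \<tau>\<^sub>t / 4 + \<i> (\<tau>\<^sub>t\<^sub>t x\<^sup>2 / 8 + \<chi>\<^sub>t x / 2 + \<sigma>)\<close>, the constant of integration \<open>c\<close>
  coming from the imaginary part of the last equation. This is exactly the field
  \<open>D(\<tau>) + G(\<chi>) + c I + \<sigma> M + Z(H)\<close>, and the real part of the last equation becomes the
  classifying condition.
\<close>

section \<open>Smooth maps\<close>

definition dderiv :: "('a::real_normed_vector \<Rightarrow> 'b::real_normed_vector) \<Rightarrow> 'a \<Rightarrow> 'a \<Rightarrow> 'b" where
  "dderiv f v x = frechet_derivative f (at x) v"

lemma dderiv_eq: "(f has_derivative F) (at x) \<Longrightarrow> dderiv f v x = F v"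
  using frechet_derivative_at[of f F x] by (simp add: dderiv_def)

lemma Ck_SucI: "(\<And>x. (f has_derivative F x) (at x)) \<Longrightarrow> (\<And>v. Ck n (\<lambda>x. F x v)) \<Longrightarrow> Ck (Suc n) f"
  by (simp only: Ck.simps) (rule exI[of _ F], auto)

lemma Ck_Suc_iff:
  "Ck (Suc n) f \<longleftrightarrow> (\<forall>x. (f has_derivative (\<lambda>v. dderiv f v x)) (at x)) \<and> (\<forall>v. Ck n (dderiv f v))"
proof
  assume "Ck (Suc n) f"
  then obtain f' where f': "\<And>x. (f has_derivative f' x) (at x)" "\<And>v. Ck n (\<lambda>x. f' x v)" by auto
  have "dderiv f v x = f' x v" for x v using f'(1) by (rule dderiv_eq)
  then have "(\<lambda>v. dderiv f v x) = f' x" "dderiv f v = (\<lambda>x. f' x v)" for x v by auto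
  then show "(\<forall>x. (f has_derivative (\<lambda>v. dderiv f v x)) (at x)) \<and> (\<forall>v. Ck n (dderiv f v))"
    using f' by simp
next
  assume "(\<forall>x. (f has_derivative (\<lambda>v. dderiv f v x)) (at x)) \<and> (\<forall>v. Ck n (dderiv f v))"
  then show "Ck (Suc n) f" by (intro Ck_SucI) auto
qed

lemma Ck_Suc_has_derivative: "Ck (Suc n) f \<Longrightarrow> (f has_derivative (\<lambda>v. dderiv f v x)) (at x)"
  using Ck_Suc_iff by blast

lemma Ck_Suc_dderiv: "Ck (Suc n) f \<Longrightarrow> Ck n (dderiv f v)"
  using Ck_Suc_iff by blast

lemma Ck_Suc_imp_Ck: "Ck (Suc n) f \<Longrightarrow> Ck n f"
proof (induction n arbitrary: f)
  case 0
  then have "continuous (at x) f" for x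
    using Ck_Suc_has_derivative has_derivative_continuous by blast
  then show ?case by (simp add: continuous_at_imp_continuous_on)
next
  case (Suc n)
  show ?case
    by (rule Ck_SucI[OF Ck_Suc_has_derivative[OF Suc.prems]])
       (rule Suc.IH, rule Ck_Suc_dderiv[OF Suc.prems])
qed

lemma Ck_const: "Ck n (\<lambda>x. c)"
proof (induction n arbitrary: c)
  case 0 then show ?case by simp
next
  case (Suc n) show ?case by (rule Ck_SucI[where F="\<lambda>x v. 0"]) (auto intro: Suc)
qed

lemma Ck_ident: "Ck n (\<lambda>x. x)"
proof (cases n)
  case (Suc m)
  show ?thesis unfolding Suc by (rule Ck_SucI[where F="\<lambda>x v. v"]) (auto intro: Ck_const)
qed simp

lemma Ck_bounded_linear: "bounded_linear L \<Longrightarrow> Ck n f \<Longrightarrow> Ck n (\<lambda>x. L (f x))"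
proof (induction n arbitrary: f)
  case 0 then show ?case by (simp add: bounded_linear.continuous_on)
next
  case (Suc n)
  show ?case
    by (rule Ck_SucI[OF bounded_linear.has_derivative[OF Suc.prems(1) Ck_Suc_has_derivative[OF Suc.prems(2)]]])
       (rule Suc.IH[OF Suc.prems(1) Ck_Suc_dderiv[OF Suc.prems(2)]])
qed

lemma Ck_add: "Ck n f \<Longrightarrow> Ck n g \<Longrightarrow> Ck n (\<lambda>x. f x + g x)"
proof (induction n arbitrary: f g)
  case 0 then show ?case by (auto intro!: continuous_intros)
next
  case (Suc n)
  note d = Ck_Suc_has_derivative[OF Suc.prems(1)] Ck_Suc_has_derivative[OF Suc.prems(2)]
  show ?case
    by (rule Ck_SucI[OF has_derivative_add[OF d]])
       (rule Suc.IH[OF Ck_Suc_dderiv[OF Suc.prems(1)] Ck_Suc_dderiv[OF Suc.prems(2)]])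
qed

lemma Ck_sum: "finite S \<Longrightarrow> (\<And>i. i \<in> S \<Longrightarrow> Ck n (f i)) \<Longrightarrow> Ck n (\<lambda>x. \<Sum>i\<in>S. f i x)"
  by (induction S rule: finite_induct) (simp_all add: Ck_const Ck_add)

lemma Ck_bounded_bilinear:
  assumes P: "bounded_bilinear P"
  shows "Ck n f \<Longrightarrow> Ck n g \<Longrightarrow> Ck n (\<lambda>x. P (f x) (g x))"
proof (induction n arbitrary: f g)
  case 0 then show ?case
    using bounded_bilinear.continuous_on[OF P] by auto
next
  case (Suc n)
  note d = Ck_Suc_has_derivative[OF Suc.prems(1)] Ck_Suc_has_derivative[OF Suc.prems(2)]
  note dC = Ck_Suc_dderiv[OF Suc.prems(1)] Ck_Suc_dderiv[OF Suc.prems(2)]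
  have "Ck n f" "Ck n g" using Suc.prems Ck_Suc_imp_Ck by auto
  then show ?case
    by (intro Ck_SucI[OF bounded_bilinear.FDERIV[OF P d]] Ck_add Suc.IH dC)
qed

lemma linear_sum_Basis:
  assumes "linear L"
  shows "L w = (\<Sum>b\<in>Basis. (w \<bullet> b) *\<^sub>R L (b::'a::euclidean_space))"
proof -
  have "L w = L (\<Sum>b\<in>Basis. (w \<bullet> b) *\<^sub>R b)" by (simp add: euclidean_representation)
  also have "\<dots> = (\<Sum>b\<in>Basis. (w \<bullet> b) *\<^sub>R L b)"
    by (simp add: linear_sum[OF assms] linear_scale[OF assms])
  finally show ?thesis .
qed

text \<open>Expanding over a basis of the intermediate space exhibits the derivative of \<open>f \<circ> g\<close>
  as a finite sum of products of \<open>C\<^sup>n\<close> functions.\<close>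

lemma Ck_compose:
  fixes g :: "'a::real_normed_vector \<Rightarrow> 'b::euclidean_space" and f :: "'b \<Rightarrow> 'c::real_normed_vector"
  shows "Ck n f \<Longrightarrow> Ck n g \<Longrightarrow> Ck n (\<lambda>x. f (g x))"
proof (induction n arbitrary: f g)
  case 0 then show ?case
    by (simp add: continuous_on_compose2[of UNIV f UNIV g])
next
  case (Suc n)
  have fd: "\<And>y. (f has_derivative (\<lambda>v. dderiv f v y)) (at y)" using Ck_Suc_has_derivative[OF Suc.prems(1)] .
  have gd: "\<And>x. (g has_derivative (\<lambda>v. dderiv g v x)) (at x)" using Ck_Suc_has_derivative[OF Suc.prems(2)] .
  define F where "F = (\<lambda>x v. \<Sum>b\<in>Basis. (dderiv g v x \<bullet> b) *\<^sub>R dderiv f b (g x))"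
  have "((\<lambda>x. f (g x)) has_derivative F x) (at x)" for x
  proof -
    have "(\<lambda>v. dderiv f (dderiv g v x) (g x)) = F x"
      unfolding F_def by (rule ext, rule linear_sum_Basis, rule has_derivative_linear[OF fd])
    then show ?thesis using has_derivative_compose[OF gd[of x] fd] by simp
  qed
  moreover have "Ck n (\<lambda>x. F x v)" for v
    unfolding F_def
  proof (rule Ck_sum)
    fix b :: 'b
    have "Ck n (\<lambda>x. dderiv g v x \<bullet> b)"
      using Ck_bounded_linear[OF bounded_linear_inner_left Ck_Suc_dderiv[OF Suc.prems(2)]] .
    moreover have "Ck n (\<lambda>x. dderiv f b (g x))"
      using Suc.IH[OF Ck_Suc_dderiv[OF Suc.prems(1)] Ck_Suc_imp_Ck[OF Suc.prems(2)]] .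
    ultimately show "Ck n (\<lambda>x. (dderiv g v x \<bullet> b) *\<^sub>R dderiv f b (g x))"
      using Ck_bounded_bilinear[OF bounded_bilinear_scaleR] by blast
  qed simp
  ultimately show ?case by (rule Ck_SucI)
qed

lemma smoothI: "(\<And>n. Ck n f) \<Longrightarrow> smooth f" by (simp add: smooth_def)

lemma smooth_has_derivative: "smooth f \<Longrightarrow> (f has_derivative (\<lambda>v. dderiv f v x)) (at x)"
  using Ck_Suc_has_derivative[of 0 f] by (simp add: smooth_def)

lemma smooth_dderiv: "smooth f \<Longrightarrow> smooth (dderiv f v)"
  unfolding smooth_def by (blast intro: Ck_Suc_dderiv)

lemma smooth_const[simp]: "smooth (\<lambda>x. c)" by (rule smoothI, rule Ck_const)
lemma smooth_ident[simp]: "smooth (\<lambda>x. x)" by (rule smoothI, rule Ck_ident)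

lemma smooth_bounded_linear: "bounded_linear L \<Longrightarrow> smooth f \<Longrightarrow> smooth (\<lambda>x. L (f x))"
  by (rule smoothI, rule Ck_bounded_linear, auto simp: smooth_def)

lemma smooth_add: "smooth f \<Longrightarrow> smooth g \<Longrightarrow> smooth (\<lambda>x. f x + g x)"
  by (rule smoothI, rule Ck_add, auto simp: smooth_def)

lemma smooth_bounded_bilinear:
  "bounded_bilinear P \<Longrightarrow> smooth f \<Longrightarrow> smooth g \<Longrightarrow> smooth (\<lambda>x. P (f x) (g x))"
  by (rule smoothI, rule Ck_bounded_bilinear, auto simp: smooth_def)

lemma smooth_compose:
  fixes g :: "'a::real_normed_vector \<Rightarrow> 'b::euclidean_space" and f :: "'b \<Rightarrow> 'c::real_normed_vector"
  shows "smooth f \<Longrightarrow> smooth g \<Longrightarrow> smooth (\<lambda>x. f (g x))"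
  by (rule smoothI, rule Ck_compose, auto simp: smooth_def)

lemma smooth_mult: "smooth f \<Longrightarrow> smooth g \<Longrightarrow> smooth (\<lambda>x. f x * (g x :: 'a::real_normed_algebra))"
  using smooth_bounded_bilinear[OF bounded_bilinear_mult] .

lemma smooth_scaleR: "smooth f \<Longrightarrow> smooth g \<Longrightarrow> smooth (\<lambda>x. f x *\<^sub>R g x)"
  using smooth_bounded_bilinear[OF bounded_bilinear_scaleR] .

lemma smooth_of_real: "smooth f \<Longrightarrow> smooth (\<lambda>x. (of_real (f x) :: 'a::real_normed_algebra_1))"
  using smooth_bounded_linear[OF bounded_linear_of_real] .

lemma smooth_Re: "smooth f \<Longrightarrow> smooth (\<lambda>x. Re (f x))"
  using smooth_bounded_linear[OF bounded_linear_Re] .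
lemma smooth_Im: "smooth f \<Longrightarrow> smooth (\<lambda>x. Im (f x))"
  using smooth_bounded_linear[OF bounded_linear_Im] .
lemma smooth_fst: "smooth f \<Longrightarrow> smooth (\<lambda>x. fst (f x))"
  using smooth_bounded_linear[OF bounded_linear_fst] .
lemma smooth_snd: "smooth f \<Longrightarrow> smooth (\<lambda>x. snd (f x))"
  using smooth_bounded_linear[OF bounded_linear_snd] .

lemma smooth_minus: "smooth f \<Longrightarrow> smooth (\<lambda>x. - f x)"
  using smooth_bounded_linear[OF bounded_linear_minus[OF bounded_linear_ident]] .

lemma smooth_diff: "smooth f \<Longrightarrow> smooth g \<Longrightarrow> smooth (\<lambda>x. f x - g x)"
  using smooth_add[OF _ smooth_minus, of f g] by simp

lemma smooth_Pair: "smooth f \<Longrightarrow> smooth g \<Longrightarrow> smooth (\<lambda>x. (f x, g x))"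
  using smooth_add[OF smooth_bounded_linear[OF bounded_linear_Pair[OF bounded_linear_ident bounded_linear_zero]]
      smooth_bounded_linear[OF bounded_linear_Pair[OF bounded_linear_zero bounded_linear_ident]], of f g]
  by simp

lemma smooth_chain:
  assumes "smooth f" "(g has_derivative g') (at x within S)"
  shows "((\<lambda>x. f (g x)) has_derivative (\<lambda>v. dderiv f (g' v) (g x))) (at x within S)"
  using has_derivative_compose[OF assms(2) smooth_has_derivative[OF assms(1)]] .

lemma dderiv_linear: "smooth f \<Longrightarrow> linear (\<lambda>v. dderiv f v x)"
  using has_derivative_linear[OF smooth_has_derivative] .

lemma dderiv_add: "smooth f \<Longrightarrow> dderiv f (u + v) x = dderiv f u x + dderiv f v x"
  using linear_add[OF dderiv_linear] by blast

lemma dderiv_scaleR: "smooth f \<Longrightarrow> dderiv f (c *\<^sub>R v) x = c *\<^sub>R dderiv f v x"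
  using linear_scale[OF dderiv_linear] by blast

lemma dderiv_zero_imp_translation_invariant:
  assumes s: "smooth f" and z: "\<And>q. dderiv f v q = 0"
  shows "f (q + v) = f q"
proof -
  define g where "g = (\<lambda>s::real. f (q + s *\<^sub>R v))"
  have "(g has_derivative (\<lambda>h. 0)) (at s within UNIV)" for s
  proof -
    have "((\<lambda>s::real. q + s *\<^sub>R v) has_derivative (\<lambda>h. h *\<^sub>R v)) (at s)"
      by (auto intro!: derivative_eq_intros)
    from smooth_chain[OF s this] show ?thesis by (simp add: g_def dderiv_scaleR[OF s] z)
  qed
  then have "g 1 = g 0" by (intro has_derivative_zero_unique[of UNIV]) auto
  then show ?thesis by (simp add: g_def)
qed

section \<open>Partial derivatives in \<open>t\<close> and \<open>x\<close>\<close>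

definition smooth2 :: "(real \<Rightarrow> real \<Rightarrow> 'a::real_normed_vector) \<Rightarrow> bool" where
  "smooth2 \<psi> \<longleftrightarrow> smooth (\<lambda>p. \<psi> (fst p) (snd p))"

lemma smooth2_iff: "smooth (\<lambda>(t, x). \<psi> t x) \<longleftrightarrow> smooth2 \<psi>"
  by (simp add: smooth2_def case_prod_beta')

lemma pdt_eqI:
  assumes "((\<lambda>p. g (fst p) (snd p)) has_derivative D) (at (t, x))" and "D (1, 0) = r"
  shows "pdt g t x = r"
proof -
  have "((\<lambda>s. (s, x)) has_derivative (\<lambda>h. (h, 0))) (at t)"
    by (auto intro!: derivative_eq_intros)
  from has_derivative_compose[OF this assms(1)]
  have "((\<lambda>s. g s x) has_derivative (\<lambda>h. D (h, 0))) (at t)" by simp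
  moreover have "(\<lambda>h. D (h, 0)) = (\<lambda>h. h *\<^sub>R D (1, 0))"
  proof
    fix h :: real
    have "(h, 0) = h *\<^sub>R (1, 0)" by simp
    then show "D (h, 0) = h *\<^sub>R D (1, 0)" using linear_scale[OF has_derivative_linear[OF assms(1)]] by metis
  qed
  ultimately have "((\<lambda>s. g s x) has_vector_derivative D (1, 0)) (at t)"
    by (simp add: has_vector_derivative_def)
  then show ?thesis using assms(2) by (simp add: pdt_def vector_derivative_at)
qed

lemma pdx_eqI:
  assumes "((\<lambda>p. g (fst p) (snd p)) has_derivative D) (at (t, x))" and "D (0, 1) = r"
  shows "pdx g t x = r"
proof -
  have "((\<lambda>y. (t, y)) has_derivative (\<lambda>h. (0, h))) (at x)"
    by (auto intro!: derivative_eq_intros)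
  from has_derivative_compose[OF this assms(1)]
  have "((\<lambda>y. g t y) has_derivative (\<lambda>h. D (0, h))) (at x)" by simp
  moreover have "(\<lambda>h. D (0, h)) = (\<lambda>h. h *\<^sub>R D (0, 1))"
  proof
    fix h :: real
    have "(0, h) = h *\<^sub>R (0, 1)" by simp
    then show "D (0, h) = h *\<^sub>R D (0, 1)" using linear_scale[OF has_derivative_linear[OF assms(1)]] by metis
  qed
  ultimately have "((\<lambda>y. g t y) has_vector_derivative D (0, 1)) (at x)"
    by (simp add: has_vector_derivative_def)
  then show ?thesis using assms(2) by (simp add: pdx_def vector_derivative_at)
qed

lemma pdt_dderiv: "smooth2 \<psi> \<Longrightarrow> pdt \<psi> t x = dderiv (\<lambda>p. \<psi> (fst p) (snd p)) (1, 0) (t, x)"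
  unfolding smooth2_def by (rule pdt_eqI[OF smooth_has_derivative refl])

lemma pdx_dderiv: "smooth2 \<psi> \<Longrightarrow> pdx \<psi> t x = dderiv (\<lambda>p. \<psi> (fst p) (snd p)) (0, 1) (t, x)"
  unfolding smooth2_def by (rule pdx_eqI[OF smooth_has_derivative refl])

lemma smooth2_pdt: "smooth2 \<psi> \<Longrightarrow> smooth2 (pdt \<psi>)"
  using smooth_dderiv by (simp add: smooth2_def pdt_dderiv)

lemma smooth2_pdx: "smooth2 \<psi> \<Longrightarrow> smooth2 (pdx \<psi>)"
  using smooth_dderiv by (simp add: smooth2_def pdx_dderiv)

lemma smooth2_chain:
  assumes "smooth2 \<psi>" "(a has_derivative a') (at z within S)" "(b has_derivative b') (at z within S)"
  shows "((\<lambda>z. \<psi> (a z) (b z)) has_derivative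
            (\<lambda>v. a' v *\<^sub>R pdt \<psi> (a z) (b z) + b' v *\<^sub>R pdx \<psi> (a z) (b z))) (at z within S)"
proof -
  have s: "smooth (\<lambda>p. \<psi> (fst p) (snd p))" using assms by (simp add: smooth2_def)
  have decomp: "dderiv (\<lambda>p. \<psi> (fst p) (snd p)) (h, k) (t, x) = h *\<^sub>R pdt \<psi> t x + k *\<^sub>R pdx \<psi> t x"
    for h k t x
  proof -
    have "(h, k) = h *\<^sub>R (1, 0) + k *\<^sub>R (0::real, 1::real)" by simp
    then have "dderiv (\<lambda>p. \<psi> (fst p) (snd p)) (h, k) (t, x) =
      h *\<^sub>R dderiv (\<lambda>p. \<psi> (fst p) (snd p)) (1, 0) (t, x) + k *\<^sub>R dderiv (\<lambda>p. \<psi> (fst p) (snd p)) (0, 1) (t, x)"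
      by (simp only: dderiv_add[OF s] dderiv_scaleR[OF s])
    then show ?thesis by (simp add: pdt_dderiv[OF assms(1)] pdx_dderiv[OF assms(1)])
  qed
  have "((\<lambda>z. (a z, b z)) has_derivative (\<lambda>v. (a' v, b' v))) (at z within S)"
    using assms(2,3) by (rule has_derivative_Pair)
  from smooth_chain[OF s this] show ?thesis by (simp add: decomp)
qed

lemma smooth2_has_derivative:
  assumes "smooth2 f"
  shows "((\<lambda>p. f (fst p) (snd p)) has_derivative
    (\<lambda>v. fst v *\<^sub>R pdt f (fst p0) (snd p0) + snd v *\<^sub>R pdx f (fst p0) (snd p0))) (at p0)"
  using smooth2_chain[OF assms bounded_linear.has_derivative[OF bounded_linear_fst has_derivative_ident]
      bounded_linear.has_derivative[OF bounded_linear_snd has_derivative_ident], of p0 UNIV]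
  by simp

lemma has_vector_derivative_pdx:
  assumes "smooth2 \<psi>"
  shows "((\<lambda>u. \<psi> s u) has_vector_derivative pdx \<psi> s u) (at u within S)"
proof -
  have "((\<lambda>u. \<psi> ((\<lambda>u. s) u) ((\<lambda>u. u) u)) has_derivative
     (\<lambda>v. (\<lambda>v. 0) v *\<^sub>R pdt \<psi> s u + (\<lambda>v. v) v *\<^sub>R pdx \<psi> s u)) (at u within S)"
    by (rule smooth2_chain[OF assms]) (auto intro: derivative_intros)
  then show ?thesis by (simp add: has_vector_derivative_def)
qed

lemma has_vector_derivative_pdt:
  assumes "smooth2 \<psi>"
  shows "((\<lambda>s. \<psi> s u) has_vector_derivative pdt \<psi> s u) (at s within S)"
proof -
  have "((\<lambda>s. \<psi> ((\<lambda>s. s) s) ((\<lambda>s. u) s)) has_derivative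
     (\<lambda>v. (\<lambda>v. v) v *\<^sub>R pdt \<psi> s u + (\<lambda>v. 0) v *\<^sub>R pdx \<psi> s u)) (at s within S)"
    by (rule smooth2_chain[OF assms]) (auto intro: derivative_intros)
  then show ?thesis by (simp add: has_vector_derivative_def)
qed

lemma smooth_real_dderiv_eq: "smooth (f :: real \<Rightarrow> real) \<Longrightarrow> (\<lambda>v. dderiv f v t) = (*) (dderiv f 1 t)"
proof
  fix v :: real
  assume "smooth f"
  then have "dderiv f (v *\<^sub>R 1) t = v *\<^sub>R dderiv f 1 t" by (rule dderiv_scaleR)
  then show "dderiv f v t = dderiv f 1 t * v" by simp
qed

lemma smooth_deriv_eq_dderiv: "smooth (f :: real \<Rightarrow> real) \<Longrightarrow> deriv f t = dderiv f 1 t"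
  using smooth_has_derivative[of f t]
  by (intro DERIV_imp_deriv) (simp add: has_field_derivative_def smooth_real_dderiv_eq)

lemma smooth_real_has_real_derivative: "smooth (f :: real \<Rightarrow> real) \<Longrightarrow> (f has_real_derivative deriv f t) (at t)"
  using smooth_has_derivative[of f t]
  by (simp add: has_field_derivative_def smooth_real_dderiv_eq smooth_deriv_eq_dderiv)

lemma smooth_deriv: "smooth (f :: real \<Rightarrow> real) \<Longrightarrow> smooth (deriv f)"
proof -
  assume "smooth f"
  then have "deriv f = dderiv f 1" by (simp add: fun_eq_iff smooth_deriv_eq_dderiv)
  then show ?thesis using smooth_dderiv[OF \<open>smooth f\<close>, of 1] by simp
qed

lemma smooth_real_chain:
  assumes "smooth (f :: real \<Rightarrow> real)" "(a has_derivative a') (at z within S)"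
  shows "((\<lambda>z. f (a z)) has_derivative (\<lambda>v. a' v * deriv f (a z))) (at z within S)"
  using has_derivative_compose[OF assms(2) smooth_real_has_real_derivative[OF assms(1), unfolded has_field_derivative_def]]
  by (simp add: mult.commute)

lemma smooth_continuous_on: "smooth f \<Longrightarrow> continuous_on S f"
  using continuous_on_subset[of UNIV f S] by (metis Ck.simps(1) smooth_def top_greatest)

lemma smooth2_continuous_on: "smooth2 g \<Longrightarrow> continuous_on S (\<lambda>(s, u). g s u)"
  unfolding smooth2_def case_prod_beta' by (rule smooth_continuous_on)

lemma smooth2_slice_t: "smooth2 g \<Longrightarrow> smooth (\<lambda>t. g t c)"
  unfolding smooth2_def
  using smooth_compose[of "\<lambda>p. g (fst p) (snd p)" "\<lambda>t::real. (t, c)"] by (simp add: smooth_Pair)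

lemma smooth2_slice_x: "smooth2 g \<Longrightarrow> smooth (\<lambda>u. g s u)"
  unfolding smooth2_def
  using smooth_compose[of "\<lambda>p. g (fst p) (snd p)" "\<lambda>u::real. (s, u)"] by (simp add: smooth_Pair)

lemma pdx_zero_imp_const:
  assumes "smooth2 g" "\<And>y. pdx g t y = 0"
  shows "g t x = g t 0"
proof -
  have "((\<lambda>y. g t y) has_derivative (\<lambda>h. 0)) (at y within UNIV)" for y
    using has_vector_derivative_pdx[OF assms(1), of t y UNIV] assms(2)[of y]
    by (simp add: has_vector_derivative_def)
  then show ?thesis by (intro has_derivative_zero_unique[of UNIV]) auto
qed


text \<open>Schwarz's theorem, via the fundamental theorem of calculus in \<open>x\<close> and differentiation
  under the integral sign in \<open>t\<close>.\<close>

lemma pdt_diff_eq_integral_pdt_pdx: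
  fixes \<psi> :: "real \<Rightarrow> real \<Rightarrow> complex"
  assumes a: "smooth2 \<psi>" and "L \<le> v"
  shows "pdt \<psi> t v - pdt \<psi> t L = integral {L..v} (pdt (pdx \<psi>) t)"
proof -
  have b: "smooth2 (pdx \<psi>)" using smooth2_pdx[OF a] .
  have ftc: "integral {L..v} (pdx \<psi> s) = \<psi> s v - \<psi> s L" for s
    using fundamental_theorem_of_calculus[OF assms(2), of "\<lambda>u. \<psi> s u" "pdx \<psi> s"]
      has_vector_derivative_pdx[OF a] by (simp add: integral_unique)
  have "((\<lambda>s. integral (cbox L v) (pdx \<psi> s)) has_vector_derivative integral (cbox L v) (pdt (pdx \<psi>) t))
      (at t within UNIV)"
  proof (rule leibniz_rule_vector_derivative)
    show "pdx \<psi> s integrable_on cbox L v" for s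
      using integrable_continuous_interval[OF smooth_continuous_on[OF smooth2_slice_x[OF b]]] by simp
    show "continuous_on (UNIV \<times> cbox L v) (\<lambda>(x, u). pdt (pdx \<psi>) x u)"
      by (rule smooth2_continuous_on[OF smooth2_pdt[OF b]])
  qed (use has_vector_derivative_pdt[OF b] in auto)
  then have "((\<lambda>s. \<psi> s v - \<psi> s L) has_vector_derivative integral {L..v} (pdt (pdx \<psi>) t)) (at t)"
    using ftc by (simp add: cbox_interval)
  moreover have "((\<lambda>s. \<psi> s v - \<psi> s L) has_vector_derivative pdt \<psi> t v - pdt \<psi> t L) (at t)"
    by (intro has_vector_derivative_diff has_vector_derivative_pdt[OF a])
  ultimately show ?thesis using vector_derivative_unique_at by blast
qed

lemma pdx_pdt_commute:
  fixes \<psi> :: "real \<Rightarrow> real \<Rightarrow> complex"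
  assumes a: "smooth2 \<psi>"
  shows "pdx (pdt \<psi>) t y = pdt (pdx \<psi>) t y"
proof -
  define L U where "L = y - 1" and "U = y + 1"
  have "((\<lambda>v. integral {L..v} (pdt (pdx \<psi>) t)) has_vector_derivative pdt (pdx \<psi>) t y) (at y within {L..U})"
    by (rule integral_has_vector_derivative[OF
          smooth_continuous_on[OF smooth2_slice_x[OF smooth2_pdt[OF smooth2_pdx[OF a]]]]])
       (simp add: L_def U_def)
  then have "((\<lambda>v. integral {L..v} (pdt (pdx \<psi>) t)) has_vector_derivative pdt (pdx \<psi>) t y)
      (at y within {L<..<U})"
    by (rule has_vector_derivative_within_subset) auto
  moreover have "at y within {L<..<U} = at y" by (rule at_within_open) (auto simp: L_def U_def)
  ultimately have "((\<lambda>v. integral {L..v} (pdt (pdx \<psi>) t)) has_vector_derivative pdt (pdx \<psi>) t y) (at y)"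
    by simp
  then have "((\<lambda>v. pdt \<psi> t v - pdt \<psi> t L) has_vector_derivative pdt (pdx \<psi>) t y) (at y)"
    by (rule has_vector_derivative_transform_within_open[of _ _ _ "{L<..<U}"])
       (auto simp: L_def U_def pdt_diff_eq_integral_pdt_pdx[OF a])
  moreover have "((\<lambda>v. pdt \<psi> t v - pdt \<psi> t L) has_vector_derivative pdx (pdt \<psi>) t y) (at y)"
    using has_vector_derivative_diff[OF has_vector_derivative_pdx[OF smooth2_pdt[OF a]]
        has_vector_derivative_const] by simp
  ultimately show ?thesis using vector_derivative_unique_at by blast
qed

lemma pdt_pdx_eq: "smooth2 \<psi> \<Longrightarrow> pdt (pdx \<psi>) = pdx (pdt (\<psi> :: real \<Rightarrow> real \<Rightarrow> complex))"
  by (simp add: fun_eq_iff pdx_pdt_commute)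

lemma pdt_pdx_pdx_eq: "smooth2 \<psi> \<Longrightarrow> pdt (pdx (pdx \<psi>)) = pdx (pdx (pdt (\<psi> :: real \<Rightarrow> real \<Rightarrow> complex)))"
  by (simp add: fun_eq_iff pdx_pdt_commute[OF smooth2_pdx, symmetric] pdt_pdx_eq)

lemma smooth2_add[simp]: "smooth2 f \<Longrightarrow> smooth2 g \<Longrightarrow> smooth2 (\<lambda>s y. f s y + g s y)"
  unfolding smooth2_def by (rule smooth_add)
lemma smooth2_diff[simp]: "smooth2 f \<Longrightarrow> smooth2 g \<Longrightarrow> smooth2 (\<lambda>s y. f s y - g s y)"
  unfolding smooth2_def by (rule smooth_diff)
lemma smooth2_mult[simp]: "smooth2 f \<Longrightarrow> smooth2 g \<Longrightarrow> smooth2 (\<lambda>s y. f s y * (g s y :: 'a::real_normed_algebra))"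
  unfolding smooth2_def by (rule smooth_mult)
lemma smooth2_scaleR[simp]: "smooth2 f \<Longrightarrow> smooth2 g \<Longrightarrow> smooth2 (\<lambda>s y. f s y *\<^sub>R g s y)"
  unfolding smooth2_def by (rule smooth_scaleR)
lemma smooth2_of_real[simp]: "smooth2 f \<Longrightarrow> smooth2 (\<lambda>s y. (of_real (f s y) :: 'a::real_normed_algebra_1))"
  unfolding smooth2_def by (rule smooth_of_real)
lemma smooth2_Re[simp]: "smooth2 f \<Longrightarrow> smooth2 (\<lambda>s y. Re (f s y))"
  unfolding smooth2_def by (rule smooth_Re)
lemma smooth2_Im[simp]: "smooth2 f \<Longrightarrow> smooth2 (\<lambda>s y. Im (f s y))"
  unfolding smooth2_def by (rule smooth_Im)
lemma smooth2_const[simp]: "smooth2 (\<lambda>s y. c)"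
  unfolding smooth2_def by simp
lemma smooth2_snd[simp]: "smooth2 (\<lambda>s y. y)"
  unfolding smooth2_def by (rule smooth_snd[OF smooth_ident])
lemma smooth2_fun_t[simp]: "smooth (c :: real \<Rightarrow> 'a::real_normed_vector) \<Longrightarrow> smooth2 (\<lambda>s y. c s)"
  unfolding smooth2_def by (rule smooth_compose[OF _ smooth_fst[OF smooth_ident]])
lemma smooth2_compose_jet[simp]:
  "smooth (g :: real \<times> real \<times> complex \<Rightarrow> 'a::real_normed_vector) \<Longrightarrow> smooth2 \<psi> \<Longrightarrow> smooth2 (\<lambda>s y. g (s, y, \<psi> s y))"
  unfolding smooth2_def
  by (rule smooth_compose, assumption,
      intro smooth_Pair smooth_fst smooth_snd smooth_ident, assumption)

lemma pdx_add[simp]: "smooth2 f \<Longrightarrow> smooth2 g \<Longrightarrow> pdx (\<lambda>s y. f s y + g s y) t x = pdx f t x + pdx g t x"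
  by (rule pdx_eqI, rule has_derivative_add[OF smooth2_has_derivative smooth2_has_derivative], auto)
lemma pdt_add[simp]: "smooth2 f \<Longrightarrow> smooth2 g \<Longrightarrow> pdt (\<lambda>s y. f s y + g s y) t x = pdt f t x + pdt g t x"
  by (rule pdt_eqI, rule has_derivative_add[OF smooth2_has_derivative smooth2_has_derivative], auto)
lemma pdx_diff[simp]: "smooth2 f \<Longrightarrow> smooth2 g \<Longrightarrow> pdx (\<lambda>s y. f s y - g s y) t x = pdx f t x - pdx g t x"
  by (rule pdx_eqI, rule has_derivative_diff[OF smooth2_has_derivative smooth2_has_derivative], auto)
lemma pdt_diff[simp]: "smooth2 f \<Longrightarrow> smooth2 g \<Longrightarrow> pdt (\<lambda>s y. f s y - g s y) t x = pdt f t x - pdt g t x"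
  by (rule pdt_eqI, rule has_derivative_diff[OF smooth2_has_derivative smooth2_has_derivative], auto)
lemma pdx_mult[simp]: "smooth2 f \<Longrightarrow> smooth2 g \<Longrightarrow>
  pdx (\<lambda>s y. f s y * (g s y :: 'a::real_normed_algebra)) t x = f t x * pdx g t x + pdx f t x * g t x"
  by (rule pdx_eqI, rule has_derivative_mult[OF smooth2_has_derivative smooth2_has_derivative], auto)
lemma pdt_mult[simp]: "smooth2 f \<Longrightarrow> smooth2 g \<Longrightarrow>
  pdt (\<lambda>s y. f s y * (g s y :: 'a::real_normed_algebra)) t x = f t x * pdt g t x + pdt f t x * g t x"
  by (rule pdt_eqI, rule has_derivative_mult[OF smooth2_has_derivative smooth2_has_derivative], auto)
lemma pdx_scaleR[simp]: "smooth2 f \<Longrightarrow> smooth2 g \<Longrightarrow>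
  pdx (\<lambda>s y. f s y *\<^sub>R g s y) t x = f t x *\<^sub>R pdx g t x + pdx f t x *\<^sub>R g t x"
  by (rule pdx_eqI, rule has_derivative_scaleR[OF smooth2_has_derivative smooth2_has_derivative], auto)
lemma pdx_of_real[simp]: "smooth2 f \<Longrightarrow> pdx (\<lambda>s y. (of_real (f s y) :: 'a::real_normed_algebra_1)) t x = of_real (pdx f t x)"
  by (rule pdx_eqI, rule bounded_linear.has_derivative[OF bounded_linear_of_real smooth2_has_derivative], auto)
lemma pdt_of_real[simp]: "smooth2 f \<Longrightarrow> pdt (\<lambda>s y. (of_real (f s y) :: 'a::real_normed_algebra_1)) t x = of_real (pdt f t x)"
  by (rule pdt_eqI, rule bounded_linear.has_derivative[OF bounded_linear_of_real smooth2_has_derivative], auto)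
lemma pdx_Re[simp]: "smooth2 f \<Longrightarrow> pdx (\<lambda>s y. Re (f s y)) t x = Re (pdx f t x)"
  by (rule pdx_eqI, rule bounded_linear.has_derivative[OF bounded_linear_Re smooth2_has_derivative], auto)
lemma pdx_Im[simp]: "smooth2 f \<Longrightarrow> pdx (\<lambda>s y. Im (f s y)) t x = Im (pdx f t x)"
  by (rule pdx_eqI, rule bounded_linear.has_derivative[OF bounded_linear_Im smooth2_has_derivative], auto)
lemma pdt_const[simp]: "pdt (\<lambda>s y. c) t x = 0"
  by (simp add: pdt_def)
lemma pdx_fun_t[simp]: "pdx (\<lambda>s y. c s) t x = 0"
  by (simp add: pdx_def)
lemma pdt_fun_t[simp]: "smooth (c :: real \<Rightarrow> real) \<Longrightarrow> pdt (\<lambda>s y. c s) t x = deriv c t"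
  by (simp add: pdt_def vector_derivative_at smooth_real_has_real_derivative has_real_derivative_iff_has_vector_derivative[symmetric])
lemma pdt_snd[simp]: "pdt (\<lambda>s y. y) t x = 0"
  by (simp add: pdt_def)
lemma pdx_snd[simp]: "pdx (\<lambda>s y. y) t x = 1"
  by (simp add: pdx_def)

section \<open>Jets and the prolongation\<close>

definition Dt :: "(real \<times> real \<times> complex \<Rightarrow> 'a::real_normed_vector) \<Rightarrow> real \<times> real \<times> complex \<Rightarrow> 'a"
  where "Dt f = dderiv f (1, 0, 0)"
definition Dx :: "(real \<times> real \<times> complex \<Rightarrow> 'a::real_normed_vector) \<Rightarrow> real \<times> real \<times> complex \<Rightarrow> 'a"
  where "Dx f = dderiv f (0, 1, 0)"
definition Dr :: "(real \<times> real \<times> complex \<Rightarrow> 'a::real_normed_vector) \<Rightarrow> real \<times> real \<times> complex \<Rightarrow> 'a"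
  where "Dr f = dderiv f (0, 0, 1)"
definition Di :: "(real \<times> real \<times> complex \<Rightarrow> 'a::real_normed_vector) \<Rightarrow> real \<times> real \<times> complex \<Rightarrow> 'a"
  where "Di f = dderiv f (0, 0, \<i>)"

lemma smooth_jet_partials[simp]: "smooth f \<Longrightarrow> smooth (Dt f)" "smooth f \<Longrightarrow> smooth (Dx f)"
  "smooth f \<Longrightarrow> smooth (Dr f)" "smooth f \<Longrightarrow> smooth (Di f)"
  by (simp_all add: Dt_def Dx_def Dr_def Di_def smooth_dderiv)

lemma dderiv_split:
  assumes "smooth f"
  shows "dderiv f (a, b, w) q = a *\<^sub>R Dt f q + b *\<^sub>R Dx f q + Re w *\<^sub>R Dr f q + Im w *\<^sub>R Di f q"
proof -
  have "(a, b, w) = a *\<^sub>R (1, 0, 0) + b *\<^sub>R (0, 1, 0) + Re w *\<^sub>R (0, 0, 1) + Im w *\<^sub>R (0::real, 0::real, \<i>)"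
    by (simp add: complex_eq_iff)
  then show ?thesis
    by (simp only: dderiv_add[OF assms] dderiv_scaleR[OF assms] Dt_def Dx_def Dr_def Di_def)
qed

lemma pdx_compose_jet[simp]:
  assumes "smooth g" "smooth2 \<psi>"
  shows "pdx (\<lambda>s y. g (s, y, \<psi> s y)) t x =
    Dx g (t, x, \<psi> t x) + Re (pdx \<psi> t x) *\<^sub>R Dr g (t, x, \<psi> t x) + Im (pdx \<psi> t x) *\<^sub>R Di g (t, x, \<psi> t x)"
proof -
  have "((\<lambda>p. (fst p, snd p, \<psi> (fst p) (snd p))) has_derivative
      (\<lambda>v. (fst v, snd v, fst v *\<^sub>R pdt \<psi> t x + snd v *\<^sub>R pdx \<psi> t x))) (at (t, x))"
    by (intro has_derivative_Pair smooth2_has_derivative[OF assms(2), of "(t, x)", simplified]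
        bounded_linear.has_derivative[OF bounded_linear_fst has_derivative_ident]
        bounded_linear.has_derivative[OF bounded_linear_snd has_derivative_ident])
  from smooth_chain[OF assms(1) this]
  show ?thesis by (rule pdx_eqI) (simp add: dderiv_split[OF assms(1)])
qed

lemma pdt_compose_jet[simp]:
  assumes "smooth g" "smooth2 \<psi>"
  shows "pdt (\<lambda>s y. g (s, y, \<psi> s y)) t x =
    Dt g (t, x, \<psi> t x) + Re (pdt \<psi> t x) *\<^sub>R Dr g (t, x, \<psi> t x) + Im (pdt \<psi> t x) *\<^sub>R Di g (t, x, \<psi> t x)"
proof -
  have "((\<lambda>p. (fst p, snd p, \<psi> (fst p) (snd p))) has_derivative
      (\<lambda>v. (fst v, snd v, fst v *\<^sub>R pdt \<psi> t x + snd v *\<^sub>R pdx \<psi> t x))) (at (t, x))"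
    by (intro has_derivative_Pair smooth2_has_derivative[OF assms(2), of "(t, x)", simplified]
        bounded_linear.has_derivative[OF bounded_linear_fst has_derivative_ident]
        bounded_linear.has_derivative[OF bounded_linear_snd has_derivative_ident])
  from smooth_chain[OF assms(1) this]
  show ?thesis by (rule pdt_eqI) (simp add: dderiv_split[OF assms(1)])
qed

lemma smooth2_div_const[simp]: "smooth2 f \<Longrightarrow> smooth2 (\<lambda>s y. f s y / (c :: 'a::{real_normed_field}))"
proof -
  assume a: "smooth2 f"
  have "smooth2 (\<lambda>s y. f s y * inverse c)" using a by simp
  then show ?thesis by (simp add: divide_inverse)
qed

lemma pdx_div_const[simp]: "smooth2 f \<Longrightarrow> pdx (\<lambda>s y. f s y / (c :: 'a::{real_normed_field})) t x = pdx f t x / c"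
proof -
  assume a: "smooth2 f"
  have "pdx (\<lambda>s y. f s y * inverse c) t x = pdx f t x * inverse c" using a by simp
  then show ?thesis by (simp add: divide_inverse)
qed

lemma pdt_div_const[simp]: "smooth2 f \<Longrightarrow> pdt (\<lambda>s y. f s y / (c :: 'a::{real_normed_field})) t x = pdt f t x / c"
proof -
  assume a: "smooth2 f"
  have "pdt (\<lambda>s y. f s y * inverse c) t x = pdt f t x * inverse c" using a by simp
  then show ?thesis by (simp add: divide_inverse)
qed

definition total_dt :: "(real \<times> real \<times> complex \<Rightarrow> 'a::real_normed_vector) \<Rightarrow> real \<times> real \<times> complex \<Rightarrow> complex \<Rightarrow> 'a" where
  "total_dt f q e = Dt f q + Re e *\<^sub>R Dr f q + Im e *\<^sub>R Di f q"
definition total_dx :: "(real \<times> real \<times> complex \<Rightarrow> 'a::real_normed_vector) \<Rightarrow> real \<times> real \<times> complex \<Rightarrow> complex \<Rightarrow> 'a" where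
  "total_dx f q a = Dx f q + Re a *\<^sub>R Dr f q + Im a *\<^sub>R Di f q"
definition total_dxx :: "(real \<times> real \<times> complex \<Rightarrow> 'a::real_normed_vector) \<Rightarrow> real \<times> real \<times> complex \<Rightarrow> complex \<Rightarrow> complex \<Rightarrow> 'a" where
  "total_dxx f q a B = total_dx (Dx f) q a + Re B *\<^sub>R Dr f q + Re a *\<^sub>R total_dx (Dr f) q a + Im B *\<^sub>R Di f q + Im a *\<^sub>R total_dx (Di f) q a"

text \<open>The left-hand side of the invariance condition as a function of the 2-jet
  \<open>(z, e, a, B, w) = (\<psi>, \<psi>\<^sub>t, \<psi>\<^sub>x, \<psi>\<^sub>x\<^sub>x, \<psi>\<^sub>x\<^sub>t)\<close>; \<open>total_dt\<close>, \<open>total_dx\<close>, \<open>total_dxx\<close> are the total derivatives.\<close>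

definition prolong_jet :: "(real \<Rightarrow> real \<Rightarrow> real) \<Rightarrow> (real \<times> real \<times> complex \<Rightarrow> real) \<Rightarrow> (real \<times> real \<times> complex \<Rightarrow> real)
   \<Rightarrow> (real \<times> real \<times> complex \<Rightarrow> complex) \<Rightarrow> real \<Rightarrow> real \<Rightarrow> complex \<Rightarrow> complex \<Rightarrow> complex \<Rightarrow> complex \<Rightarrow> complex \<Rightarrow> complex" where
  "prolong_jet V \<tau> \<xi> \<eta> t x z e a B w =
    \<i> * (total_dt \<eta> (t, x, z) e - of_real (total_dt \<tau> (t, x, z) e) * e - of_real (total_dt \<xi> (t, x, z) e) * a)
    + total_dxx \<eta> (t, x, z) a B - of_real (total_dxx \<tau> (t, x, z) a B) * e - 2 * of_real (total_dx \<tau> (t, x, z) a) * w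
    - of_real (total_dxx \<xi> (t, x, z) a B) * a - 2 * of_real (total_dx \<xi> (t, x, z) a) * B
    + of_real (\<tau> (t, x, z) * pdt V t x + \<xi> (t, x, z) * pdx V t x) * z + of_real (V t x) * \<eta> (t, x, z)"

definition total_dx_along :: "(real \<Rightarrow> real \<Rightarrow> complex) \<Rightarrow> (real \<times> real \<times> complex \<Rightarrow> 'a::real_normed_vector) \<Rightarrow> real \<Rightarrow> real \<Rightarrow> 'a"
  where "total_dx_along \<psi> f s y = Dx f (s, y, \<psi> s y) + Re (pdx \<psi> s y) *\<^sub>R Dr f (s, y, \<psi> s y)
      + Im (pdx \<psi> s y) *\<^sub>R Di f (s, y, \<psi> s y)"

lemma smooth2_total_dx_along: "smooth2 \<psi> \<Longrightarrow> smooth f \<Longrightarrow> smooth2 (total_dx_along \<psi> f)"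
proof -
  assume a: "smooth2 \<psi>" "smooth f"
  have "smooth2 (\<lambda>s y. Dx f (s, y, \<psi> s y) + Re (pdx \<psi> s y) *\<^sub>R Dr f (s, y, \<psi> s y)
      + Im (pdx \<psi> s y) *\<^sub>R Di f (s, y, \<psi> s y))" using a smooth2_pdx[OF a(1)] by simp
  then show ?thesis by (simp add: total_dx_along_def[abs_def])
qed

lemma pdx_total_dx_along: "smooth2 \<psi> \<Longrightarrow> smooth f \<Longrightarrow> pdx (total_dx_along \<psi> f) t x = total_dxx f (t, x, \<psi> t x) (pdx \<psi> t x) (pdx (pdx \<psi>) t x)"
proof -
  assume a: "smooth2 \<psi>" "smooth f"
  have "pdx (total_dx_along \<psi> f) t x = pdx (\<lambda>s y. Dx f (s, y, \<psi> s y) + Re (pdx \<psi> s y) *\<^sub>R Dr f (s, y, \<psi> s y)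
      + Im (pdx \<psi> s y) *\<^sub>R Di f (s, y, \<psi> s y)) t x" by (simp add: total_dx_along_def[abs_def])
  also have "\<dots> = total_dxx f (t, x, \<psi> t x) (pdx \<psi> t x) (pdx (pdx \<psi>) t x)"
    using a smooth2_pdx[OF a(1)] smooth2_pdx[OF smooth2_pdx[OF a(1)]] by (simp add: total_dxx_def total_dx_def algebra_simps)
  finally show ?thesis .
qed

lemma total_dx_along_eq: "smooth2 \<psi> \<Longrightarrow> total_dx_along \<psi> f t x = total_dx f (t, x, \<psi> t x) (pdx \<psi> t x)"
  by (simp add: total_dx_along_def total_dx_def)

lemma prolong_schr_eq_prolong_jet:
  fixes \<psi> :: "real \<Rightarrow> real \<Rightarrow> complex"
  assumes s: "smooth \<tau>" "smooth \<xi>" "smooth \<eta>" "smooth2 \<psi>"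
  shows "prolong_schr V (\<tau>, \<xi>, \<eta>) \<psi> t x =
     prolong_jet V \<tau> \<xi> \<eta> t x (\<psi> t x) (pdt \<psi> t x) (pdx \<psi> t x) (pdx (pdx \<psi>) t x) (pdx (pdt \<psi>) t x)"
proof -
  note ps = s(4) smooth2_pdt[OF s(4)] smooth2_pdx[OF s(4)] smooth2_pdx[OF smooth2_pdx[OF s(4)]]
     smooth2_pdt[OF smooth2_pdx[OF s(4)]] smooth2_pdx[OF smooth2_pdt[OF s(4)]]
  note sw1 = pdt_pdx_eq[OF s(4)] and sw2 = pdt_pdx_pdx_eq[OF s(4)]
  define Qc where "Qc = (\<lambda>s y. \<eta> (s, y, \<psi> s y) - of_real (\<tau> (s, y, \<psi> s y)) * pdt \<psi> s y
      - of_real (\<xi> (s, y, \<psi> s y)) * pdx \<psi> s y)"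
  have Qx: "pdx Qc = (\<lambda>s y. total_dx_along \<psi> \<eta> s y
      - (of_real (\<tau> (s, y, \<psi> s y)) * pdx (pdt \<psi>) s y + of_real (total_dx_along \<psi> \<tau> s y) * pdt \<psi> s y)
      - (of_real (\<xi> (s, y, \<psi> s y)) * pdx (pdx \<psi>) s y + of_real (total_dx_along \<psi> \<xi> s y) * pdx \<psi> s y))"
    by (rule ext)+ (simp add: Qc_def ps s total_dx_along_def)
  have Qxx: "pdx (pdx Qc) t x = total_dxx \<eta> (t, x, \<psi> t x) (pdx \<psi> t x) (pdx (pdx \<psi>) t x)
      - (of_real (\<tau> (t, x, \<psi> t x)) * pdx (pdx (pdt \<psi>)) t x + of_real (total_dx_along \<psi> \<tau> t x) * pdx (pdt \<psi>) t x
         + (of_real (total_dx_along \<psi> \<tau> t x) * pdx (pdt \<psi>) t x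
            + of_real (total_dxx \<tau> (t, x, \<psi> t x) (pdx \<psi> t x) (pdx (pdx \<psi>) t x)) * pdt \<psi> t x))
      - (of_real (\<xi> (t, x, \<psi> t x)) * pdx (pdx (pdx \<psi>)) t x + of_real (total_dx_along \<psi> \<xi> t x) * pdx (pdx \<psi>) t x
         + (of_real (total_dx_along \<psi> \<xi> t x) * pdx (pdx \<psi>) t x
            + of_real (total_dxx \<xi> (t, x, \<psi> t x) (pdx \<psi> t x) (pdx (pdx \<psi>) t x)) * pdx \<psi> t x))"
    unfolding Qx using s ps by (simp add: smooth2_total_dx_along[OF s(4)] pdx_total_dx_along[OF s(4)] total_dx_along_eq[OF s(4), of _ t x] total_dx_def)
  have Qt: "pdt Qc t x = total_dt \<eta> (t, x, \<psi> t x) (pdt \<psi> t x)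
      - (of_real (\<tau> (t, x, \<psi> t x)) * pdt (pdt \<psi>) t x + of_real (total_dt \<tau> (t, x, \<psi> t x) (pdt \<psi> t x)) * pdt \<psi> t x)
      - (of_real (\<xi> (t, x, \<psi> t x)) * pdt (pdx \<psi>) t x + of_real (total_dt \<xi> (t, x, \<psi> t x) (pdt \<psi> t x)) * pdx \<psi> t x)"
    using s ps by (simp add: Qc_def total_dt_def)
  have "prolong_schr V (\<tau>, \<xi>, \<eta>) \<psi> t x =
     \<i> * (pdt Qc t x + of_real (\<tau> (t, x, \<psi> t x)) * pdt (pdt \<psi>) t x + of_real (\<xi> (t, x, \<psi> t x)) * pdx (pdt \<psi>) t x)
     + (pdx (pdx Qc) t x + of_real (\<tau> (t, x, \<psi> t x)) * pdt (pdx (pdx \<psi>)) t x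
        + of_real (\<xi> (t, x, \<psi> t x)) * pdx (pdx (pdx \<psi>)) t x)
     + of_real (\<tau> (t, x, \<psi> t x) * pdt V t x + \<xi> (t, x, \<psi> t x) * pdx V t x) * \<psi> t x
     + of_real (V t x) * \<eta> (t, x, \<psi> t x)"
    by (simp add: prolong_schr_def Let_def Qc_def)
  also have "\<dots> = prolong_jet V \<tau> \<xi> \<eta> t x (\<psi> t x) (pdt \<psi> t x) (pdx \<psi> t x) (pdx (pdx \<psi>) t x) (pdx (pdt \<psi>) t x)"
    unfolding Qt Qxx sw1 sw2 total_dx_along_eq[OF s(4)] prolong_jet_def by (simp add: algebra_simps)
  finally show ?thesis .
qed

lemma lie_symmetry_smooth: "is_lie_symmetry V (\<tau>, \<xi>, \<eta>) \<Longrightarrow> smooth \<tau> \<and> smooth \<xi> \<and> smooth \<eta>"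
  by (simp add: is_lie_symmetry_def)

lemma jet_realisation:
  "\<exists>\<psi>::real \<Rightarrow> real \<Rightarrow> complex. smooth2 \<psi> \<and> \<psi> t x = z \<and> pdt \<psi> t x = e \<and> pdx \<psi> t x = a
      \<and> pdx (pdx \<psi>) t x = B \<and> pdx (pdt \<psi>) t x = w"
proof -
  define \<psi> where "\<psi> = (\<lambda>s y. z + a * of_real (y - x) + B * of_real ((y - x) * (y - x)) / 2
       + e * of_real (s - t) + w * of_real ((s - t) * (y - x)))"
  have pt: "pdt \<psi> = (\<lambda>s y. e + w * of_real (y - x))"
    unfolding \<psi>_def by (rule ext)+ (simp add: field_simps)
  have px: "pdx \<psi> = (\<lambda>s y. a + B * of_real (y - x) + w * of_real (s - t))"
    unfolding \<psi>_def by (rule ext)+ (simp add: field_simps)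
  have "smooth2 \<psi>" unfolding \<psi>_def by simp
  moreover have "\<psi> t x = z" "pdt \<psi> t x = e" "pdx \<psi> t x = a" "pdx (pdx \<psi>) t x = B" "pdx (pdt \<psi>) t x = w"
    unfolding pt px by (simp_all add: \<psi>_def)
  ultimately show ?thesis by blast
qed

lemma lie_symmetry_prolong_zero:
  "is_lie_symmetry V Q \<Longrightarrow> smooth2 \<psi> \<Longrightarrow> schr V \<psi> t x = 0 \<Longrightarrow> prolong_schr V Q \<psi> t x = 0"
  by (simp add: is_lie_symmetry_def smooth2_iff)

lemma lie_symmetry_prolong_jet:
  assumes sym: "is_lie_symmetry V (\<tau>, \<xi>, \<eta>)"
  shows "prolong_jet V \<tau> \<xi> \<eta> t x z (\<i> * (B + of_real (V t x) * z)) a B w = 0"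
proof -
  obtain \<psi> :: "real \<Rightarrow> real \<Rightarrow> complex" where \<psi>: "smooth2 \<psi>" "\<psi> t x = z"
      "pdt \<psi> t x = \<i> * (B + of_real (V t x) * z)" "pdx \<psi> t x = a" "pdx (pdx \<psi>) t x = B" "pdx (pdt \<psi>) t x = w"
    using jet_realisation by blast
  have "schr V \<psi> t x = 0" unfolding schr_def using \<psi> by (simp add: algebra_simps)
  then have "prolong_schr V (\<tau>, \<xi>, \<eta>) \<psi> t x = 0" by (rule lie_symmetry_prolong_zero[OF sym \<psi>(1)])
  moreover have "smooth \<tau>" "smooth \<xi>" "smooth \<eta>" using lie_symmetry_smooth[OF sym] by auto
  ultimately show ?thesis using prolong_schr_eq_prolong_jet[of \<tau> \<xi> \<eta> \<psi>] \<psi> by simp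
qed

lemma dderiv_const: "dderiv (\<lambda>q. c) v q = 0"
  by (rule dderiv_eq[OF has_derivative_const, THEN trans]) simp

lemma jet_partials_const[simp]: "Dt (\<lambda>q. c) = (\<lambda>q. 0)" "Dx (\<lambda>q. c) = (\<lambda>q. 0)" "Dr (\<lambda>q. c) = (\<lambda>q. 0)" "Di (\<lambda>q. c) = (\<lambda>q. 0)"
  by (simp_all add: Dt_def Dx_def Dr_def Di_def dderiv_const fun_eq_iff)

section \<open>Structure of the symmetries\<close>

lemma prolong_jet_linear_in_w:
  "prolong_jet V \<tau> \<xi> \<eta> t x z e a B w
     = prolong_jet V \<tau> \<xi> \<eta> t x z e a B 0 - 2 * of_real (total_dx \<tau> (t, x, z) a) * w"
  by (simp add: prolong_jet_def)

text \<open>As \<open>w = \<psi>\<^sub>x\<^sub>t\<close> is free, its coefficient, the total \<open>x\<close>-derivative of \<open>\<tau>\<close>, must vanish.\<close>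

lemma lie_symmetry_tau_eq:
  assumes sym: "is_lie_symmetry V (\<tau>, \<xi>, \<eta>)"
  shows "\<tau> = (\<lambda>q. \<tau> (fst q, 0, 0))"
proof -
  have sm: "smooth \<tau>" using lie_symmetry_smooth[OF sym] by auto
  have dtx0: "total_dx \<tau> q a = 0" for q a
  proof -
    obtain t x z where q: "q = (t, x, z)" by (cases q) auto
    have "prolong_jet V \<tau> \<xi> \<eta> t x z (\<i> * (0 + of_real (V t x) * z)) a 0 1 = 0"
         "prolong_jet V \<tau> \<xi> \<eta> t x z (\<i> * (0 + of_real (V t x) * z)) a 0 0 = 0"
      using lie_symmetry_prolong_jet[OF sym] by blast+
    then show ?thesis using prolong_jet_linear_in_w[of V \<tau> \<xi> \<eta> t x z _ a 0 1] q by simp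
  qed
  have "Dx \<tau> q = 0" "Dr \<tau> q = 0" "Di \<tau> q = 0" for q
    using dtx0[of q 0] dtx0[of q 1] dtx0[of q \<i>] by (simp_all add: total_dx_def)
  then have z: "dderiv \<tau> (0, x, z) q = 0" for x z q by (simp add: dderiv_split[OF sm])
  show ?thesis
  proof
    fix q :: "real \<times> real \<times> complex"
    obtain t x z where q: "q = (t, x, z)" by (cases q) auto
    have "\<tau> ((t, 0, 0) + (0, x, z)) = \<tau> (t, 0, 0)" by (rule dderiv_zero_imp_translation_invariant[OF sm z])
    then show "\<tau> q = \<tau> (fst q, 0, 0)" by (simp add: q)
  qed
qed

lemma dderiv_lift_t: "smooth \<tau>0 \<Longrightarrow> dderiv (\<lambda>q::real \<times> real \<times> complex. \<tau>0 (fst q)) v q = fst v * deriv \<tau>0 (fst q)"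
  by (rule dderiv_eq, rule smooth_real_chain, assumption,
      rule bounded_linear.has_derivative[OF bounded_linear_fst has_derivative_ident])

lemma jet_partials_lift_t[simp]:
  assumes "smooth (\<tau>0 :: real \<Rightarrow> real)"
  shows "Dt (\<lambda>q::real \<times> real \<times> complex. \<tau>0 (fst q)) = (\<lambda>q. deriv \<tau>0 (fst q))"
    "Dx (\<lambda>q::real \<times> real \<times> complex. \<tau>0 (fst q)) = (\<lambda>q. 0)"
    "Dr (\<lambda>q::real \<times> real \<times> complex. \<tau>0 (fst q)) = (\<lambda>q. 0)"
    "Di (\<lambda>q::real \<times> real \<times> complex. \<tau>0 (fst q)) = (\<lambda>q. 0)"
  by (simp_all add: Dt_def Dx_def Dr_def Di_def dderiv_lift_t[OF assms] fun_eq_iff)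

lemma smooth_restrict_t: "smooth (\<tau> :: real \<times> real \<times> complex \<Rightarrow> real) \<Longrightarrow> smooth (\<lambda>t. \<tau> (t, 0, 0))"
  by (rule smooth_compose, assumption) (intro smooth_Pair smooth_ident smooth_const)

lemma lie_symmetry_eta_cauchy_riemann:
  assumes sym: "is_lie_symmetry V (\<lambda>q. \<tau>0 (fst q), \<xi>, \<eta>)" and st: "smooth \<tau>0"
  shows "Di \<eta> (t, x, z) = \<i> * Dr \<eta> (t, x, z)"
proof -
  have h: "prolong_jet V (\<lambda>q. \<tau>0 (fst q)) \<xi> \<eta> t x z (\<i> * (B + of_real (V t x) * z)) 0 B 0 = 0" for B
    using lie_symmetry_prolong_jet[OF sym] by blast
  from h[of 0] h[of 1] h[of \<i>] show ?thesis
    by (simp add: prolong_jet_def total_dt_def total_dx_def total_dxx_def st complex_eq_iff algebra_simps)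
qed

lemma lie_symmetry_xi_psi_indep:
  assumes sym: "is_lie_symmetry V (\<lambda>q. \<tau>0 (fst q), \<xi>, \<eta>)" and st: "smooth \<tau>0"
  shows "Dr \<xi> (t, x, z) = 0 \<and> Di \<xi> (t, x, z) = 0"
proof -
  have h: "prolong_jet V (\<lambda>q. \<tau>0 (fst q)) \<xi> \<eta> t x z (\<i> * (B + of_real (V t x) * z)) a B 0 = 0" for a B
    using lie_symmetry_prolong_jet[OF sym] by blast
  note e00 = h[of 0 0] and e10 = h[of 1 0] and e01 = h[of 0 1] and e11 = h[of 1 1]
  show ?thesis
    using e00 e10 e01 e11
    by (simp add: prolong_jet_def total_dt_def total_dx_def total_dxx_def st complex_eq_iff algebra_simps)
qed

lemma dderiv_lift_tx: "smooth2 g \<Longrightarrow> dderiv (\<lambda>q::real \<times> real \<times> complex. g (fst q) (fst (snd q))) v q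
    = fst v *\<^sub>R pdt g (fst q) (fst (snd q)) + fst (snd v) *\<^sub>R pdx g (fst q) (fst (snd q))"
  by (rule dderiv_eq, rule smooth2_chain, assumption,
      rule bounded_linear.has_derivative[OF bounded_linear_fst has_derivative_ident],
      rule bounded_linear.has_derivative[OF bounded_linear_fst bounded_linear.has_derivative[OF bounded_linear_snd has_derivative_ident]])

lemma jet_partials_lift_tx[simp]:
  assumes "smooth2 g"
  shows "Dt (\<lambda>q::real \<times> real \<times> complex. g (fst q) (fst (snd q))) = (\<lambda>q. pdt g (fst q) (fst (snd q)))"
    "Dx (\<lambda>q::real \<times> real \<times> complex. g (fst q) (fst (snd q))) = (\<lambda>q. pdx g (fst q) (fst (snd q)))"
    "Dr (\<lambda>q::real \<times> real \<times> complex. g (fst q) (fst (snd q))) = (\<lambda>q. 0)"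
    "Di (\<lambda>q::real \<times> real \<times> complex. g (fst q) (fst (snd q))) = (\<lambda>q. 0)"
  by (simp_all add: Dt_def Dx_def Dr_def Di_def dderiv_lift_tx[OF assms] fun_eq_iff)

lemma jet_partials_lift_tx_pdx[simp]:
  assumes "smooth2 g"
  shows "Dt (\<lambda>q::real \<times> real \<times> complex. pdx g (fst q) (fst (snd q))) = (\<lambda>q. pdt (pdx g) (fst q) (fst (snd q)))"
    "Dx (\<lambda>q::real \<times> real \<times> complex. pdx g (fst q) (fst (snd q))) = (\<lambda>q. pdx (pdx g) (fst q) (fst (snd q)))"
    "Dr (\<lambda>q::real \<times> real \<times> complex. pdx g (fst q) (fst (snd q))) = (\<lambda>q. 0)"
    "Di (\<lambda>q::real \<times> real \<times> complex. pdx g (fst q) (fst (snd q))) = (\<lambda>q. 0)"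
  using jet_partials_lift_tx[OF smooth2_pdx[OF assms]] by simp_all

lemma smooth2_restrict_tx: "smooth (\<xi> :: real \<times> real \<times> complex \<Rightarrow> 'a::real_normed_vector) \<Longrightarrow> smooth2 (\<lambda>t x. \<xi> (t, x, 0))"
  unfolding smooth2_def
  by (rule smooth_compose, assumption) (intro smooth_Pair smooth_fst smooth_snd smooth_ident smooth_const)

lemma lie_symmetry_xi_eq:
  assumes sym: "is_lie_symmetry V (\<lambda>q. \<tau>0 (fst q), \<xi>, \<eta>)" and st: "smooth \<tau>0"
  shows "\<xi> = (\<lambda>q. \<xi> (fst q, fst (snd q), 0))"
proof
  fix q :: "real \<times> real \<times> complex"
  obtain t x z where q: "q = (t, x, z)" by (cases q) auto
  have sm: "smooth \<xi>" using lie_symmetry_smooth[OF sym] by auto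
  have "dderiv \<xi> (0, 0, z) q' = 0" for q'
  proof -
    obtain t' x' z' where "q' = (t', x', z')" by (cases q') auto
    then show ?thesis using lie_symmetry_xi_psi_indep[OF sym st, of t' x' z'] by (simp add: dderiv_split[OF sm])
  qed
  then have "\<xi> ((t, x, 0) + (0, 0, z)) = \<xi> (t, x, 0)" by (rule dderiv_zero_imp_translation_invariant[OF sm])
  then show "\<xi> q = \<xi> (fst q, fst (snd q), 0)" by (simp add: q)
qed

lemma dderiv_cmult: "smooth f \<Longrightarrow> dderiv (\<lambda>q. c * (f q :: complex)) v q = c * dderiv f v q"
  by (rule dderiv_eq, rule has_derivative_mult[OF has_derivative_const smooth_has_derivative, THEN has_derivative_eq_rhs])
     (auto simp: fun_eq_iff)

lemma lie_symmetry_eta_psi_psi: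
  assumes sym: "is_lie_symmetry V (\<lambda>q. \<tau>0 (fst q), \<lambda>q. \<xi>0 (fst q) (fst (snd q)), \<eta>)"
    and st: "smooth \<tau>0" and sx: "smooth2 \<xi>0"
  shows "Dr (Dr \<eta>) (t, x, z) = 0 \<and> Di (Di \<eta>) (t, x, z) = 0"
proof -
  have h: "prolong_jet V (\<lambda>q. \<tau>0 (fst q)) (\<lambda>q. \<xi>0 (fst q) (fst (snd q))) \<eta> t x z (\<i> * (0 + of_real (V t x) * z)) a 0 0 = 0" for a
    using lie_symmetry_prolong_jet[OF sym] by blast
  note e0 = h[of 0] and e1 = h[of 1] and e2 = h[of "-1"] and e3 = h[of \<i>] and e4 = h[of "-\<i>"]
  show ?thesis
    using e0 e1 e2 e3 e4
    by (simp add: prolong_jet_def total_dt_def total_dx_def total_dxx_def st sx complex_eq_iff algebra_simps)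
qed

lemma smooth_lift_t: "smooth (f :: real \<Rightarrow> 'a::real_normed_vector) \<Longrightarrow> smooth (\<lambda>q::real \<times> real \<times> complex. f (fst q))"
  using smooth_compose[of f "\<lambda>q::real \<times> real \<times> complex. fst q"] by (simp add: smooth_fst)

lemma smooth_lift_tx: "smooth2 g \<Longrightarrow> smooth (\<lambda>q::real \<times> real \<times> complex. g (fst q) (fst (snd q)))"
  unfolding smooth2_def
  using smooth_compose[of "\<lambda>p. g (fst p) (snd p)" "\<lambda>q::real \<times> real \<times> complex. (fst q, fst (snd q))"]
  by (simp add: smooth_Pair smooth_fst smooth_snd)

lemma Dr_eq_Dr_psi_zero:
  fixes \<eta> :: "real \<times> real \<times> complex \<Rightarrow> complex"
  assumes sm: "smooth \<eta>" and hDi: "\<And>q. Di \<eta> q = \<i> * Dr \<eta> q"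
    and hrr: "\<And>q. Dr (Dr \<eta>) q = 0" and hii: "\<And>q. Di (Di \<eta>) q = 0"
  shows "Dr \<eta> (t, x, z) = Dr \<eta> (t, x, 0)"
proof -
  have sr: "smooth (Dr \<eta>)" using sm by simp
  have fe: "Di \<eta> = (\<lambda>q. \<i> * Dr \<eta> q)" using hDi by (simp add: fun_eq_iff)
  have ri: "Di (Dr \<eta>) q = 0" for q
  proof -
    have "Di (Di \<eta>) q = Di (\<lambda>q. \<i> * Dr \<eta> q) q" by (simp only: fe)
    also have "\<dots> = \<i> * Di (Dr \<eta>) q" unfolding Di_def by (rule dderiv_cmult[OF sr])
    finally show ?thesis using hii by simp
  qed
  have "dderiv (Dr \<eta>) (0, 0, z) q = 0" for q by (simp add: dderiv_split[OF sr] hrr ri)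
  then have "Dr \<eta> ((t, x, 0) + (0, 0, z)) = Dr \<eta> (t, x, 0)"
    by (rule dderiv_zero_imp_translation_invariant[OF sr])
  then show ?thesis by simp
qed

lemma affine_in_psi:
  fixes \<eta> :: "real \<times> real \<times> complex \<Rightarrow> complex"
  assumes sm: "smooth \<eta>" and hDi: "\<And>q. Di \<eta> q = \<i> * Dr \<eta> q"
    and hrr: "\<And>q. Dr (Dr \<eta>) q = 0" and hii: "\<And>q. Di (Di \<eta>) q = 0"
  shows "\<eta> = (\<lambda>q. \<eta> (fst q, fst (snd q), 0) + Dr \<eta> (fst q, fst (snd q), 0) * snd (snd q))"
proof -
  note rinv = Dr_eq_Dr_psi_zero[OF assms]
  define F where "F = (\<lambda>t x. Dr \<eta> (t, x, 0))"
  have sF: "smooth2 F" unfolding F_def by (rule smooth2_restrict_tx) (simp add: sm)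
  define k where "k = (\<lambda>q. \<eta> q - snd (snd q) * F (fst q) (fst (snd q)))"
  have sk: "smooth k" unfolding k_def
    by (intro smooth_diff sm smooth_mult smooth_snd smooth_ident smooth_lift_tx[OF sF])
  have dk: "dderiv k (0, 0, z) q = 0" for z q
  proof -
    obtain t x w where q: "q = (t, x, w)" by (cases q) auto
    have "(k has_derivative (\<lambda>v. dderiv \<eta> v q - (snd (snd q) * (fst v *\<^sub>R pdt F (fst q) (fst (snd q))
        + fst (snd v) *\<^sub>R pdx F (fst q) (fst (snd q))) + snd (snd v) * F (fst q) (fst (snd q))))) (at q)"
      unfolding k_def
      by (intro has_derivative_diff smooth_has_derivative[OF sm] has_derivative_mult smooth2_chain[OF sF]
          bounded_linear.has_derivative[OF bounded_linear_fst has_derivative_ident]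
          bounded_linear.has_derivative[OF bounded_linear_snd has_derivative_ident]
          bounded_linear.has_derivative[OF bounded_linear_fst bounded_linear.has_derivative[OF bounded_linear_snd has_derivative_ident]]
          bounded_linear.has_derivative[OF bounded_linear_snd bounded_linear.has_derivative[OF bounded_linear_snd has_derivative_ident]])
    then have "dderiv k (0, 0, z) q = dderiv \<eta> (0, 0, z) q - z * F t x" by (simp add: dderiv_eq q)
    also have "dderiv \<eta> (0, 0, z) q = z * F t x"
      by (simp add: dderiv_split[OF sm] q hDi F_def rinv[of t x w] complex_eq_iff algebra_simps)
    finally show ?thesis by simp
  qed
  show ?thesis
  proof
    fix q :: "real \<times> real \<times> complex"
    obtain t x z where q: "q = (t, x, z)" by (cases q) auto
    have "k ((t, x, 0) + (0, 0, z)) = k (t, x, 0)" by (rule dderiv_zero_imp_translation_invariant[OF sk dk])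
    then show "\<eta> q = \<eta> (fst q, fst (snd q), 0) + Dr \<eta> (fst q, fst (snd q), 0) * snd (snd q)"
      by (simp add: k_def q F_def algebra_simps eq_diff_eq)
  qed
qed

definition reduced_vf :: "(real \<Rightarrow> real) \<Rightarrow> (real \<Rightarrow> real \<Rightarrow> real) \<Rightarrow> (real \<Rightarrow> real \<Rightarrow> complex) \<Rightarrow> (real \<Rightarrow> real \<Rightarrow> complex) \<Rightarrow> vf" where
  "reduced_vf \<tau>0 \<xi>0 H0 F = (\<lambda>q. \<tau>0 (fst q), \<lambda>q. \<xi>0 (fst q) (fst (snd q)),
     \<lambda>q. H0 (fst q) (fst (snd q)) + F (fst q) (fst (snd q)) * snd (snd q))"

lemma lie_symmetry_reduced_form:
  assumes sym: "is_lie_symmetry V Q"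
  obtains \<tau>0 \<xi>0 H0 F where "Q = reduced_vf \<tau>0 \<xi>0 H0 F"
    and "smooth \<tau>0" "smooth2 \<xi>0" "smooth2 H0" "smooth2 F"
proof -
  obtain \<tau> \<xi> \<eta> where Q: "Q = (\<tau>, \<xi>, \<eta>)" by (cases Q)
  define \<tau>0 \<xi>0 H0 F where "\<tau>0 = (\<lambda>t. \<tau> (t, 0, 0))" and "\<xi>0 = (\<lambda>t x. \<xi> (t, x, 0))"
    and "H0 = (\<lambda>t x. \<eta> (t, x, 0))" and "F = (\<lambda>t x. Dr \<eta> (t, x, 0))"
  have sym: "is_lie_symmetry V (\<tau>, \<xi>, \<eta>)" using sym Q by simp
  have sm: "smooth \<tau>" "smooth \<xi>" "smooth \<eta>" using lie_symmetry_smooth[OF sym] by auto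
  have st: "smooth \<tau>0" unfolding \<tau>0_def by (rule smooth_restrict_t[OF sm(1)])
  have sx: "smooth2 \<xi>0" unfolding \<xi>0_def by (rule smooth2_restrict_tx[OF sm(2)])
  have t1: "\<tau> = (\<lambda>q. \<tau>0 (fst q))" unfolding \<tau>0_def by (rule lie_symmetry_tau_eq[OF sym])
  have sym1: "is_lie_symmetry V (\<lambda>q. \<tau>0 (fst q), \<xi>, \<eta>)" using sym t1 by simp
  have hDi: "Di \<eta> q = \<i> * Dr \<eta> q" for q
    using lie_symmetry_eta_cauchy_riemann[OF sym1 st, of "fst q" "fst (snd q)" "snd (snd q)"] by simp
  have x1: "\<xi> = (\<lambda>q. \<xi>0 (fst q) (fst (snd q)))" unfolding \<xi>0_def by (rule lie_symmetry_xi_eq[OF sym1 st])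
  have sym2: "is_lie_symmetry V (\<lambda>q. \<tau>0 (fst q), \<lambda>q. \<xi>0 (fst q) (fst (snd q)), \<eta>)" using sym1 x1 by simp
  have hrr: "Dr (Dr \<eta>) q = 0" and hii: "Di (Di \<eta>) q = 0" for q
    using lie_symmetry_eta_psi_psi[OF sym2 st sx, of "fst q" "fst (snd q)" "snd (snd q)"] by simp_all
  have e1: "\<eta> = (\<lambda>q. H0 (fst q) (fst (snd q)) + F (fst q) (fst (snd q)) * snd (snd q))"
    unfolding H0_def F_def by (rule affine_in_psi[OF sm(3) hDi hrr hii])
  show thesis
  proof
    show "Q = reduced_vf \<tau>0 \<xi>0 H0 F" unfolding reduced_vf_def using Q t1 x1 e1 by simp
    show "smooth2 H0" unfolding H0_def by (rule smooth2_restrict_tx[OF sm(3)])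
    show "smooth2 F" unfolding F_def by (rule smooth2_restrict_tx) (simp add: sm(3))
  qed (fact st sx)+
qed

section \<open>Reduced vector fields\<close>

lemma smooth_reduced_vf:
  assumes "smooth \<tau>0" "smooth2 \<xi>0" "smooth2 H0" "smooth2 F"
  shows "case reduced_vf \<tau>0 \<xi>0 H0 F of (\<tau>, \<xi>, \<eta>) \<Rightarrow> smooth \<tau> \<and> smooth \<xi> \<and> smooth \<eta>"
  unfolding reduced_vf_def
  using smooth_lift_t[OF assms(1)] smooth_lift_tx[OF assms(2)]
    smooth_add[OF smooth_lift_tx[OF assms(3)]
      smooth_mult[OF smooth_lift_tx[OF assms(4)] smooth_snd[OF smooth_snd[OF smooth_ident]]]]
  by simp

lemma prolong_schr_reduced_vf:
  fixes \<psi> :: "real \<Rightarrow> real \<Rightarrow> complex"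
  assumes s: "smooth \<tau>0" "smooth2 \<xi>0" "smooth2 H0" "smooth2 F" "smooth2 \<psi>"
  shows "prolong_schr V (reduced_vf \<tau>0 \<xi>0 H0 F) \<psi> t x =
    schr V H0 t x + (F t x - of_real (deriv \<tau>0 t)) * schr V \<psi> t x
    + of_real (deriv \<tau>0 t - 2 * pdx \<xi>0 t x) * pdx (pdx \<psi>) t x
    + (2 * pdx F t x - \<i> * of_real (pdt \<xi>0 t x) - of_real (pdx (pdx \<xi>0) t x)) * pdx \<psi> t x
    + (\<i> * pdt F t x + pdx (pdx F) t x
       + of_real (deriv \<tau>0 t * V t x + \<tau>0 t * pdt V t x + \<xi>0 t x * pdx V t x)) * \<psi> t x"
    (is "_ = ?rhs")
proof -
  note ps = s(5) smooth2_pdt[OF s(5)] smooth2_pdx[OF s(5)] smooth2_pdx[OF smooth2_pdx[OF s(5)]]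
     smooth2_pdt[OF smooth2_pdx[OF s(5)]] smooth2_pdx[OF smooth2_pdt[OF s(5)]]
  note ss = s(1-4) smooth2_pdx[OF s(2)] smooth2_pdx[OF s(3)] smooth2_pdx[OF s(4)]
  define Qc where "Qc = (\<lambda>s y. H0 s y + F s y * \<psi> s y - of_real (\<tau>0 s) * pdt \<psi> s y - of_real (\<xi>0 s y) * pdx \<psi> s y)"
  have Qx: "pdx Qc = (\<lambda>s y. pdx H0 s y + (F s y * pdx \<psi> s y + pdx F s y * \<psi> s y)
      - of_real (\<tau>0 s) * pdx (pdt \<psi>) s y
      - (of_real (\<xi>0 s y) * pdx (pdx \<psi>) s y + of_real (pdx \<xi>0 s y) * pdx \<psi> s y))"
    by (rule ext)+ (simp add: Qc_def ps ss)
  have Qxx: "pdx (pdx Qc) t x = pdx (pdx H0) t x + (F t x * pdx (pdx \<psi>) t x + pdx F t x * pdx \<psi> t x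
      + (pdx F t x * pdx \<psi> t x + pdx (pdx F) t x * \<psi> t x))
      - of_real (\<tau>0 t) * pdx (pdx (pdt \<psi>)) t x
      - (of_real (\<xi>0 t x) * pdx (pdx (pdx \<psi>)) t x + of_real (pdx \<xi>0 t x) * pdx (pdx \<psi>) t x
         + (of_real (pdx \<xi>0 t x) * pdx (pdx \<psi>) t x + of_real (pdx (pdx \<xi>0) t x) * pdx \<psi> t x))"
    unfolding Qx by (simp add: ps ss smooth2_pdx)
  have Qt: "pdt Qc t x = pdt H0 t x + (F t x * pdt \<psi> t x + pdt F t x * \<psi> t x)
      - (of_real (\<tau>0 t) * pdt (pdt \<psi>) t x + of_real (deriv \<tau>0 t) * pdt \<psi> t x)
      - (of_real (\<xi>0 t x) * pdt (pdx \<psi>) t x + of_real (pdt \<xi>0 t x) * pdx \<psi> t x)"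
    by (simp add: Qc_def ps ss)
  have "prolong_schr V (reduced_vf \<tau>0 \<xi>0 H0 F) \<psi> t x =
     \<i> * (pdt Qc t x + of_real (\<tau>0 t) * pdt (pdt \<psi>) t x + of_real (\<xi>0 t x) * pdx (pdt \<psi>) t x)
     + (pdx (pdx Qc) t x + of_real (\<tau>0 t) * pdt (pdx (pdx \<psi>)) t x + of_real (\<xi>0 t x) * pdx (pdx (pdx \<psi>)) t x)
     + of_real (\<tau>0 t * pdt V t x + \<xi>0 t x * pdx V t x) * \<psi> t x + of_real (V t x) * (H0 t x + F t x * \<psi> t x)"
    by (simp add: prolong_schr_def reduced_vf_def Let_def Qc_def)
  also have "\<dots> = ?rhs"
    unfolding Qt Qxx pdt_pdx_eq[OF s(5)] pdt_pdx_pdx_eq[OF s(5)] by (simp add: schr_def algebra_simps)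
  finally show ?thesis .
qed

lemma lie_symmetry_reduced_vf_jet:
  assumes sym: "is_lie_symmetry V (reduced_vf \<tau>0 \<xi>0 H0 F)"
    and s: "smooth \<tau>0" "smooth2 \<xi>0" "smooth2 H0" "smooth2 F"
  shows "schr V H0 t x + of_real (deriv \<tau>0 t - 2 * pdx \<xi>0 t x) * B
      + (2 * pdx F t x - \<i> * of_real (pdt \<xi>0 t x) - of_real (pdx (pdx \<xi>0) t x)) * a
      + (\<i> * pdt F t x + pdx (pdx F) t x
         + of_real (deriv \<tau>0 t * V t x + \<tau>0 t * pdt V t x + \<xi>0 t x * pdx V t x)) * z = 0"
proof -
  obtain \<psi> :: "real \<Rightarrow> real \<Rightarrow> complex" where \<psi>: "smooth2 \<psi>" "\<psi> t x = z"
      "pdt \<psi> t x = \<i> * (B + of_real (V t x) * z)" "pdx \<psi> t x = a" "pdx (pdx \<psi>) t x = B"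
    using jet_realisation by blast
  have "schr V \<psi> t x = 0" unfolding schr_def using \<psi> by (simp add: algebra_simps)
  then have "prolong_schr V (reduced_vf \<tau>0 \<xi>0 H0 F) \<psi> t x = 0"
    by (rule lie_symmetry_prolong_zero[OF sym \<psi>(1)])
  then show ?thesis
    unfolding prolong_schr_reduced_vf[OF s \<psi>(1)] \<open>schr V \<psi> t x = 0\<close> \<psi>(2,4,5) by simp
qed

lemma lie_symmetry_reduced_vf_iff:
  assumes s: "smooth \<tau>0" "smooth2 \<xi>0" "smooth2 H0" "smooth2 F"
  shows "is_lie_symmetry V (reduced_vf \<tau>0 \<xi>0 H0 F) \<longleftrightarrow>
    is_solution V H0 \<and> (\<forall>t x. 2 * pdx \<xi>0 t x = deriv \<tau>0 t)
    \<and> (\<forall>t x. 2 * pdx F t x = \<i> * of_real (pdt \<xi>0 t x) + of_real (pdx (pdx \<xi>0) t x))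
    \<and> (\<forall>t x. \<i> * pdt F t x + pdx (pdx F) t x
              + of_real (deriv \<tau>0 t * V t x + \<tau>0 t * pdt V t x + \<xi>0 t x * pdx V t x) = 0)"
  (is "_ \<longleftrightarrow> ?sol \<and> ?xi \<and> ?F1 \<and> ?F0")
proof
  assume sym: "is_lie_symmetry V (reduced_vf \<tau>0 \<xi>0 H0 F)"
  note jet = lie_symmetry_reduced_vf_jet[OF sym s]
  have "schr V H0 t x = 0" for t x using jet[where z=0 and a=0 and B=0] by simp
  then have ?sol using s(3) by (simp add: is_solution_def smooth2_iff)
  moreover have ?xi using jet[where z=0 and a=0 and B=1] \<open>\<And>t x. schr V H0 t x = 0\<close>
    by (simp add: complex_eq_iff)
  moreover have ?F1 using jet[where z=0 and a=1 and B=0] \<open>\<And>t x. schr V H0 t x = 0\<close>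
    by (simp add: algebra_simps)
  moreover have ?F0 using jet[where z=1 and a=0 and B=0] \<open>\<And>t x. schr V H0 t x = 0\<close> by simp
  ultimately show "?sol \<and> ?xi \<and> ?F1 \<and> ?F0" by blast
next
  assume h: "?sol \<and> ?xi \<and> ?F1 \<and> ?F0"
  show "is_lie_symmetry V (reduced_vf \<tau>0 \<xi>0 H0 F)"
    unfolding is_lie_symmetry_def
  proof (intro conjI allI impI)
    show "case reduced_vf \<tau>0 \<xi>0 H0 F of (\<tau>, \<xi>, \<eta>) \<Rightarrow> smooth \<tau> \<and> smooth \<xi> \<and> smooth \<eta>"
      by (rule smooth_reduced_vf[OF s])
    fix \<psi> :: "real \<Rightarrow> real \<Rightarrow> complex" and t x
    assume "smooth (\<lambda>(t, x). \<psi> t x)" and "schr V \<psi> t x = 0"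
    moreover have "schr V H0 t x = 0" using h by (simp add: is_solution_def)
    moreover have "of_real (deriv \<tau>0 t - 2 * pdx \<xi>0 t x) = (0 :: complex)" using h by simp
    moreover have "2 * pdx F t x - \<i> * of_real (pdt \<xi>0 t x) - of_real (pdx (pdx \<xi>0) t x) = 0"
      using h by simp
    moreover have "\<i> * pdt F t x + pdx (pdx F) t x
        + of_real (deriv \<tau>0 t * V t x + \<tau>0 t * pdt V t x + \<xi>0 t x * pdx V t x) = 0"
      using h by blast
    ultimately show "prolong_schr V (reduced_vf \<tau>0 \<xi>0 H0 F) \<psi> t x = 0"
      by (simp add: prolong_schr_reduced_vf[OF s] smooth2_iff)
  qed
qed

section \<open>The generators\<close>

definition generator_xi :: "(real \<Rightarrow> real) \<Rightarrow> (real \<Rightarrow> real) \<Rightarrow> real \<Rightarrow> real \<Rightarrow> real" where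
  "generator_xi \<tau> chi = (\<lambda>t x. deriv \<tau> t / 2 * x + chi t)"

definition generator_coeff :: "(real \<Rightarrow> real) \<Rightarrow> (real \<Rightarrow> real) \<Rightarrow> (real \<Rightarrow> real) \<Rightarrow> real \<Rightarrow> real \<Rightarrow> real \<Rightarrow> complex" where
  "generator_coeff \<tau> chi \<sigma> c = (\<lambda>t x. of_real (c - deriv \<tau> t / 4)
     + \<i> * of_real (\<sigma> t + deriv (deriv \<tau>) t * (x * x) / 8 + deriv chi t * x / 2))"

lemma generators_eq_reduced_vf:
  "vf_add (vfD \<tau>) (vf_add (vfG chi) (vf_add (vf_scale c vfI) (vf_add (vfM \<sigma>) (vfZ \<eta>0))))
     = reduced_vf \<tau> (generator_xi \<tau> chi) \<eta>0 (generator_coeff \<tau> chi \<sigma> c)"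
  unfolding vf_add_def vfD_def vfG_def vf_scale_def vfI_def vfM_def vfZ_def reduced_vf_def
    generator_xi_def generator_coeff_def
  by (auto simp: fun_eq_iff algebra_simps power2_eq_square numeral_2_eq_2)

lemma
  assumes "smooth \<tau>" "smooth chi"
  shows smooth2_generator_xi: "smooth2 (generator_xi \<tau> chi)"
    and pdt_generator_xi: "pdt (generator_xi \<tau> chi) t x = deriv (deriv \<tau>) t / 2 * x + deriv chi t"
    and pdx_generator_xi: "pdx (generator_xi \<tau> chi) = (\<lambda>t x. deriv \<tau> t / 2)"
    and pdx_pdx_generator_xi: "pdx (pdx (generator_xi \<tau> chi)) t x = 0"
proof -
  note s = assms smooth_deriv[OF assms(1)] smooth_deriv[OF smooth_deriv[OF assms(1)]] smooth_deriv[OF assms(2)]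
  show "smooth2 (generator_xi \<tau> chi)" "pdt (generator_xi \<tau> chi) t x = deriv (deriv \<tau>) t / 2 * x + deriv chi t"
    using s by (simp_all add: generator_xi_def)
  show "pdx (generator_xi \<tau> chi) = (\<lambda>t x. deriv \<tau> t / 2)"
    using s by (simp add: generator_xi_def fun_eq_iff)
  then show "pdx (pdx (generator_xi \<tau> chi)) t x = 0" by simp
qed

lemma
  assumes "smooth \<tau>" "smooth chi" "smooth \<sigma>"
  shows smooth2_generator_coeff: "smooth2 (generator_coeff \<tau> chi \<sigma> c)"
    and pdt_generator_coeff: "pdt (generator_coeff \<tau> chi \<sigma> c) t x = of_real (- deriv (deriv \<tau>) t / 4)
      + \<i> * of_real (deriv \<sigma> t + deriv (deriv (deriv \<tau>)) t * (x * x) / 8 + deriv (deriv chi) t * x / 2)"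
    and pdx_generator_coeff: "pdx (generator_coeff \<tau> chi \<sigma> c) = (\<lambda>t x. \<i> * of_real (deriv (deriv \<tau>) t * x / 4 + deriv chi t / 2))"
    and pdx_pdx_generator_coeff: "pdx (pdx (generator_coeff \<tau> chi \<sigma> c)) t x = \<i> * of_real (deriv (deriv \<tau>) t / 4)"
proof -
  note s = assms smooth_deriv[OF assms(1)] smooth_deriv[OF smooth_deriv[OF assms(1)]]
    smooth_deriv[OF smooth_deriv[OF smooth_deriv[OF assms(1)]]] smooth_deriv[OF assms(2)]
    smooth_deriv[OF smooth_deriv[OF assms(2)]]
  show "smooth2 (generator_coeff \<tau> chi \<sigma> c)" "pdt (generator_coeff \<tau> chi \<sigma> c) t x = of_real (- deriv (deriv \<tau>) t / 4)
      + \<i> * of_real (deriv \<sigma> t + deriv (deriv (deriv \<tau>)) t * (x * x) / 8 + deriv (deriv chi) t * x / 2)"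
    using s by (simp_all add: generator_coeff_def)
  show "pdx (generator_coeff \<tau> chi \<sigma> c) = (\<lambda>t x. \<i> * of_real (deriv (deriv \<tau>) t * x / 4 + deriv chi t / 2))"
    using s by (simp add: generator_coeff_def fun_eq_iff field_simps)
  then show "pdx (pdx (generator_coeff \<tau> chi \<sigma> c)) t x = \<i> * of_real (deriv (deriv \<tau>) t / 4)"
    using s by simp
qed

lemma lie_symmetry_generators_iff:
  assumes s: "smooth \<tau>" "smooth chi" "smooth \<sigma>" "smooth2 \<eta>0"
  shows "is_lie_symmetry V (vf_add (vfD \<tau>) (vf_add (vfG chi) (vf_add (vf_scale c vfI) (vf_add (vfM \<sigma>) (vfZ \<eta>0)))))
    \<longleftrightarrow> det_eq V \<tau> chi \<sigma> \<and> is_solution V \<eta>0"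
proof -
  have F0_iff: "\<i> * pdt (generator_coeff \<tau> chi \<sigma> c) t x + pdx (pdx (generator_coeff \<tau> chi \<sigma> c)) t x
      + of_real (deriv \<tau> t * V t x + \<tau> t * pdt V t x + generator_xi \<tau> chi t x * pdx V t x) = 0
    \<longleftrightarrow> \<tau> t * pdt V t x + (1/2 * deriv \<tau> t * x + chi t) * pdx V t x + deriv \<tau> t * V t x
       = 1/8 * (deriv ^^ 3) \<tau> t * x\<^sup>2 + 1/2 * (deriv ^^ 2) chi t * x + deriv \<sigma> t" for t x
    using s by (simp add: pdt_generator_coeff pdx_pdx_generator_coeff generator_xi_def complex_eq_iff
        numeral_3_eq_3 numeral_2_eq_2 power2_eq_square algebra_simps)
  show ?thesis
    unfolding generators_eq_reduced_vf
    using s F0_iff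
    by (simp add: lie_symmetry_reduced_vf_iff smooth2_generator_xi smooth2_generator_coeff
        pdx_generator_xi pdt_generator_xi pdx_pdx_generator_xi pdx_generator_coeff complex_eq_iff
        det_eq_def conj_commute)
qed

lemma reduced_xi_eq_generator_xi:
  assumes st: "smooth \<tau>0" and sx: "smooth2 \<xi>0" and xi: "\<And>t x. 2 * pdx \<xi>0 t x = deriv \<tau>0 t"
  shows "\<xi>0 = generator_xi \<tau>0 (\<lambda>t. \<xi>0 t 0)"
proof (intro ext)
  fix t x
  define g where "g = (\<lambda>s y. \<xi>0 s y - deriv \<tau>0 s / 2 * y)"
  have "smooth2 g" unfolding g_def using sx smooth_deriv[OF st] by simp
  moreover have "pdx g t y = 0" for y
    using sx smooth_deriv[OF st] xi[of t y] by (simp add: g_def)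
  ultimately have "g t x = g t 0" by (rule pdx_zero_imp_const)
  then show "\<xi>0 t x = generator_xi \<tau>0 (\<lambda>t. \<xi>0 t 0) t x" by (simp add: g_def generator_xi_def)
qed

lemma reduced_coeff_eq_generator_coeff:
  assumes st: "smooth \<tau>0" and sc: "smooth chi" and sF: "smooth2 F"
    and F1: "\<And>t x. 2 * pdx F t x = \<i> * of_real (pdt (generator_xi \<tau>0 chi) t x)
                                     + of_real (pdx (pdx (generator_xi \<tau>0 chi)) t x)"
    and F0: "\<And>t x. Re (pdt F t x) + Im (pdx (pdx F) t x) = 0"
  shows "F = generator_coeff \<tau>0 chi (\<lambda>t. Im (F t 0)) (Re (F 0 0) + deriv \<tau>0 0 / 4)"
proof -
  define \<sigma> where "\<sigma> = (\<lambda>t. Im (F t 0))"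
  define \<rho> where "\<rho> = (\<lambda>t. Re (F t 0) + deriv \<tau>0 t / 4)"
  have sF0: "smooth (\<lambda>t. F t 0)" by (rule smooth2_slice_t[OF sF])
  have s\<sigma>: "smooth \<sigma>" unfolding \<sigma>_def by (rule smooth_Im[OF sF0])
  have "smooth (\<lambda>t. deriv \<tau>0 t * (1 / 4))" by (rule smooth_mult[OF smooth_deriv[OF st] smooth_const])
  then have s\<rho>: "smooth \<rho>" unfolding \<rho>_def by (simp add: smooth_add[OF smooth_Re[OF sF0]])
  note sG = smooth2_generator_coeff[OF st sc s\<sigma>]
  have F_eq: "F = (\<lambda>t x. generator_coeff \<tau>0 chi \<sigma> 0 t x + of_real (\<rho> t))"
  proof (intro ext)
    fix t x
    define g where "g = (\<lambda>s y. F s y - generator_coeff \<tau>0 chi \<sigma> 0 s y)"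
    have "smooth2 g" unfolding g_def using sF sG by simp
    moreover have "pdx g t y = 0" for y
      using F1[of t y] sF sG
      by (simp add: g_def pdx_generator_coeff[OF st sc s\<sigma>] pdt_generator_xi[OF st sc]
          pdx_pdx_generator_xi[OF st sc] complex_eq_iff field_simps)
    ultimately have "g t x = g t 0" by (rule pdx_zero_imp_const)
    then show "F t x = generator_coeff \<tau>0 chi \<sigma> 0 t x + of_real (\<rho> t)"
      by (simp add: g_def generator_coeff_def \<sigma>_def \<rho>_def complex_eq_iff)
  qed
  have "deriv \<rho> t = 0" for t
  proof -
    have "pdt F t 0 = pdt (generator_coeff \<tau>0 chi \<sigma> 0) t 0 + of_real (deriv \<rho> t)"
      by (subst F_eq) (simp add: sG s\<rho>)
    moreover have "pdx F = pdx (generator_coeff \<tau>0 chi \<sigma> 0)"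
      by (subst F_eq) (simp add: sG s\<rho> fun_eq_iff)
    ultimately show ?thesis
      using F0[of t 0] by (simp add: pdt_generator_coeff[OF st sc s\<sigma>] pdx_pdx_generator_coeff[OF st sc s\<sigma>])
  qed
  then have "\<rho> t = \<rho> 0" for t
    using DERIV_isconst_all smooth_real_has_real_derivative[OF s\<rho>] by metis
  then show ?thesis
    by (subst F_eq) (simp add: fun_eq_iff generator_coeff_def \<sigma>_def complex_eq_iff \<rho>_def eq_diff_eq)
qed

lemma lie_symmetry_imp_generated:
  assumes sym: "is_lie_symmetry V Q"
  shows "\<exists>\<tau> chi \<sigma> c \<eta>0.
    Q = vf_add (vfD \<tau>) (vf_add (vfG chi) (vf_add (vf_scale c vfI) (vf_add (vfM \<sigma>) (vfZ \<eta>0))))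
    \<and> smooth \<tau> \<and> smooth chi \<and> smooth \<sigma> \<and> det_eq V \<tau> chi \<sigma> \<and> is_solution V \<eta>0"
proof -
  obtain \<tau>0 \<xi>0 H0 F where
    Q: "Q = reduced_vf \<tau>0 \<xi>0 H0 F" and s: "smooth \<tau>0" "smooth2 \<xi>0" "smooth2 H0" "smooth2 F"
    using lie_symmetry_reduced_form[OF sym] .
  have xi: "\<And>t x. 2 * pdx \<xi>0 t x = deriv \<tau>0 t"
    and F1: "\<And>t x. 2 * pdx F t x = \<i> * of_real (pdt \<xi>0 t x) + of_real (pdx (pdx \<xi>0) t x)"
    and F0: "\<And>t x. \<i> * pdt F t x + pdx (pdx F) t x
              + of_real (deriv \<tau>0 t * V t x + \<tau>0 t * pdt V t x + \<xi>0 t x * pdx V t x) = 0"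
    using sym lie_symmetry_reduced_vf_iff[OF s, of V] by (simp_all add: Q)
  define chi where "chi = (\<lambda>t. \<xi>0 t 0)"
  define \<sigma> where "\<sigma> = (\<lambda>t. Im (F t 0))"
  define c where "c = Re (F 0 0) + deriv \<tau>0 0 / 4"
  have sc: "smooth chi" unfolding chi_def by (rule smooth2_slice_t[OF s(2)])
  have s\<sigma>: "smooth \<sigma>" unfolding \<sigma>_def by (rule smooth_Im[OF smooth2_slice_t[OF s(4)]])
  have \<xi>0: "\<xi>0 = generator_xi \<tau>0 chi"
    unfolding chi_def by (rule reduced_xi_eq_generator_xi[OF s(1,2) xi])
  have "F = generator_coeff \<tau>0 chi \<sigma> c"
    unfolding \<sigma>_def c_def
  proof (rule reduced_coeff_eq_generator_coeff[OF s(1) sc s(4)])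
    show "2 * pdx F t x = \<i> * of_real (pdt (generator_xi \<tau>0 chi) t x)
        + of_real (pdx (pdx (generator_xi \<tau>0 chi)) t x)" for t x
      using F1 by (simp add: \<xi>0)
    show "Re (pdt F t x) + Im (pdx (pdx F) t x) = 0" for t x
      using arg_cong[OF F0[of t x], of Im] by simp
  qed
  then have "Q = vf_add (vfD \<tau>0) (vf_add (vfG chi) (vf_add (vf_scale c vfI) (vf_add (vfM \<sigma>) (vfZ H0))))"
    by (simp add: Q \<xi>0 generators_eq_reduced_vf)
  moreover from this have "det_eq V \<tau>0 chi \<sigma> \<and> is_solution V H0"
    using sym lie_symmetry_generators_iff[OF s(1) sc s\<sigma> s(3)] by simp
  ultimately show ?thesis using s(1) sc s\<sigma> by blast
qed

theorem theorem10:
  fixes V :: "real \<Rightarrow> real \<Rightarrow> real"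
  assumes "smooth (\<lambda>(t, x). V t x)"
  shows "lie_algebra V =
    {vf_add (vfD \<tau>) (vf_add (vfG chi) (vf_add (vf_scale c vfI) (vf_add (vfM \<sigma>) (vfZ \<eta>0))))
      | \<tau> chi \<sigma> c \<eta>0. smooth \<tau> \<and> smooth chi \<and> smooth \<sigma> \<and> det_eq V \<tau> chi \<sigma> \<and> is_solution V \<eta>0}"
proof (intro set_eqI iffI)
  fix Q
  assume "Q \<in> lie_algebra V"
  then show "Q \<in> {vf_add (vfD \<tau>) (vf_add (vfG chi) (vf_add (vf_scale c vfI) (vf_add (vfM \<sigma>) (vfZ \<eta>0))))
      | \<tau> chi \<sigma> c \<eta>0. smooth \<tau> \<and> smooth chi \<and> smooth \<sigma> \<and> det_eq V \<tau> chi \<sigma> \<and> is_solution V \<eta>0}"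
    using lie_symmetry_imp_generated by (simp add: lie_algebra_def)
next
  fix Q
  assume "Q \<in> {vf_add (vfD \<tau>) (vf_add (vfG chi) (vf_add (vf_scale c vfI) (vf_add (vfM \<sigma>) (vfZ \<eta>0))))
      | \<tau> chi \<sigma> c \<eta>0. smooth \<tau> \<and> smooth chi \<and> smooth \<sigma> \<and> det_eq V \<tau> chi \<sigma> \<and> is_solution V \<eta>0}"
  then show "Q \<in> lie_algebra V"
    using lie_symmetry_generators_iff
    by (auto simp: lie_algebra_def is_solution_def smooth2_iff)
qed
end
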